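(* In the setting below, let $f_1,\dots,f_n$ be $x$-monomials $f_i=a_ix_1^{b_{i1}}\cdots x_n^{b_{in}}$ with $a_i\in K_w[\mathcal G]$ nonzero and $\det(b_{ij})\ne0$, and let $\Phi(\mathbf x)=\sum_{\mathbf k}\phi_{\mathbf k}\mathbf x^{\mathbf k}\in K_w^{\mathbf f}[\mathcal G\oplus\mathcal H]$. Then $\Phi(f_1,\dots,f_n)$ exists in $K_w[\mathcal G\oplus\mathcal H]$ and $$\mathop{\mathrm{CT}}_{\mathbf x}\Phi(f_1,\dots,f_n)=\mathop{\mathrm{CT}}_{f_1,\dots,f_n}\Phi(f_1,\dots,f_n)=\phi_{\mathbf 0}.$$
   Context: $K$ a field; $\mathcal G\oplus\mathcal H$ a totally ordered abelian group (translation-invariant total order) with $\mathcal H\cong\mathbb Z^n$ with basis $e_1,\dots,e_n$, $x_i=t^{e_i}$; $K_w[\cdot]$ denotes Malcev–Neumann series (formal series with well-ordered support); elements of $K_w[\mathcal G\oplus\mathcal H]$ are written $\sum_{\mathbf k}b_{\mathbf k}\mathbf x^{\mathbf k}$, $b_{\mathbf k}\in K_w[\mathcal G]$, and $\mathop{\mathrm{CT}}_{\mathbf x}$ extracts $b_{\mathbf 0}$. An $x$-monomial is a series with exactly one nonzero term $b_{\mathbf k}\mathbf x^{\mathbf k}$. If the initial (least-order) term of $f_i$ is $c_it^{g_i}\mathbf x^{\mathbf b_i}$ ($c_i\in K$, $g_i\in\mathcal G$), $\mathbf f$ denotes the injective endomorphism of $\mathcal G\oplus\mathcal H$ fixing $\mathcal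 G$ with $e_i\mapsto g_i+\sum_jb_{ij}e_j$, and $K_w^{\mathbf f}[\mathcal G\oplus\mathcal H]$ is the field of formal series whose support is well-ordered for the order $a\le^{\mathbf f}b\iff\mathbf f(a)\le\mathbf f(b)$. $\mathop{\mathrm{CT}}_{f_1,\dots,f_n}\Phi(f_1,\dots,f_n)$ denotes the coefficient $\phi_{\mathbf 0}$ of $\Phi(\mathbf x)$ viewed in $K_w^{\mathbf f}[\mathcal G\oplus\mathcal H]$; $\Phi(f_1,\dots,f_n)=\sum_{\mathbf k}\phi_{\mathbf k}f_1^{k_1}\cdots f_n^{k_n}$. *)

theory Defs
  imports Main "HOL-Combinatorics.Permutations"
begin

text \<open>The ambient group G (+) H with H = Z^n is modelled as pairs (g, k) with
  g :: 'g (an arbitrary abelian group) and k :: nat => int an exponent vector;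
  only vectors with k i = 0 for i >= n belong to H.\<close>

type_synonym 'g grp = "'g \<times> (nat \<Rightarrow> int)"

definition Hn :: "nat \<Rightarrow> (nat \<Rightarrow> int) set" where
  "Hn n = {k. \<forall>i\<ge>n. k i = 0}"

definition grp_carrier :: "nat \<Rightarrow> ('g::ab_group_add) grp set" where
  "grp_carrier n = UNIV \<times> Hn n"

definition gadd :: "('g::ab_group_add) grp \<Rightarrow> 'g grp \<Rightarrow> 'g grp" where
  "gadd x y = (fst x + fst y, \<lambda>i. snd x i + snd y i)"

definition gzero :: "('g::ab_group_add) grp" where
  "gzero = (0, \<lambda>_. 0)"

definition ordered_group_on :: "('g::ab_group_add) grp set \<Rightarrow> ('g grp \<Rightarrow> 'g grp \<Rightarrow> bool) \<Rightarrow> bool" where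
  "ordered_group_on C le \<longleftrightarrow>
     (\<forall>a\<in>C. le a a) \<and>
     (\<forall>a\<in>C. \<forall>b\<in>C. le a b \<and> le b a \<longrightarrow> a = b) \<and>
     (\<forall>a\<in>C. \<forall>b\<in>C. \<forall>c\<in>C. le a b \<and> le b c \<longrightarrow> le a c) \<and>
     (\<forall>a\<in>C. \<forall>b\<in>C. le a b \<or> le b a) \<and>
     (\<forall>a\<in>C. \<forall>b\<in>C. \<forall>c\<in>C. le a b \<longrightarrow> le (gadd a c) (gadd b c))"

definition leG :: "('g grp \<Rightarrow> 'g grp \<Rightarrow> bool) \<Rightarrow> 'g \<Rightarrow> 'g \<Rightarrow> bool" where
  "leG le g h = le (g, \<lambda>_. 0) (h, \<lambda>_. 0)"

definition supp :: "('a \<Rightarrow> 'k::zero) \<Rightarrow> 'a set" where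
  "supp s = {a. s a \<noteq> 0}"

definition well_ordered_on :: "('a \<Rightarrow> 'a \<Rightarrow> bool) \<Rightarrow> 'a set \<Rightarrow> bool" where
  "well_ordered_on le S \<longleftrightarrow> (\<forall>T\<subseteq>S. T \<noteq> {} \<longrightarrow> (\<exists>m\<in>T. \<forall>t\<in>T. le m t))"

definition MN :: "('a \<Rightarrow> 'a \<Rightarrow> bool) \<Rightarrow> 'a set \<Rightarrow> ('a \<Rightarrow> 'k::zero) set" where
  "MN le C = {s. supp s \<subseteq> C \<and> well_ordered_on le (supp s)}"

definition smult :: "('g::ab_group_add grp \<Rightarrow> 'k::field) \<Rightarrow> ('g grp \<Rightarrow> 'k) \<Rightarrow> 'g grp \<Rightarrow> 'k" where
  "smult s t c = (\<Sum>p\<in>{(a, b). a \<in> supp s \<and> b \<in> supp t \<and> gadd a b = c}. s (fst p) * t (snd p))"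

definition sone :: "'g::ab_group_add grp \<Rightarrow> 'k::field" where
  "sone c = (if c = gzero then 1 else 0)"

fun snpow :: "('g::ab_group_add grp \<Rightarrow> 'k::field) \<Rightarrow> nat \<Rightarrow> 'g grp \<Rightarrow> 'k" where
  "snpow s 0 = sone"
| "snpow s (Suc m) = smult s (snpow s m)"

definition sinv :: "('g::ab_group_add grp \<Rightarrow> 'g grp \<Rightarrow> bool) \<Rightarrow> 'g grp set \<Rightarrow> ('g grp \<Rightarrow> 'k::field) \<Rightarrow> 'g grp \<Rightarrow> 'k" where
  "sinv le C s = (THE u. u \<in> MN le C \<and> smult s u = sone)"

definition sipow :: "('g::ab_group_add grp \<Rightarrow> 'g grp \<Rightarrow> bool) \<Rightarrow> 'g grp set \<Rightarrow> ('g grp \<Rightarrow> 'k::field) \<Rightarrow> int \<Rightarrow> 'g grp \<Rightarrow> 'k" where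
  "sipow le C s k = (if 0 \<le> k then snpow s (nat k) else snpow (sinv le C s) (nat (- k)))"

fun sprod :: "(nat \<Rightarrow> 'g::ab_group_add grp \<Rightarrow> 'k::field) \<Rightarrow> nat \<Rightarrow> 'g grp \<Rightarrow> 'k" where
  "sprod F 0 = sone"
| "sprod F (Suc m) = smult (sprod F m) (F m)"

definition summable_fam :: "('a \<Rightarrow> 'a \<Rightarrow> bool) \<Rightarrow> 'a set \<Rightarrow> ('i \<Rightarrow> 'a \<Rightarrow> 'k::zero) \<Rightarrow> 'i set \<Rightarrow> bool" where
  "summable_fam le C F I \<longleftrightarrow>
     (\<Union>i\<in>I. supp (F i)) \<subseteq> C \<and> well_ordered_on le (\<Union>i\<in>I. supp (F i)) \<and>
     (\<forall>c. finite {i\<in>I. F i c \<noteq> 0})"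

definition sum_fam :: "('i \<Rightarrow> 'a \<Rightarrow> 'k::comm_monoid_add) \<Rightarrow> 'i set \<Rightarrow> 'a \<Rightarrow> 'k" where
  "sum_fam F I c = (\<Sum>i\<in>{i\<in>I. F i c \<noteq> 0}. F i c)"

definition CT_x :: "('g grp \<Rightarrow> 'k) \<Rightarrow> 'g \<Rightarrow> 'k" where
  "CT_x s = (\<lambda>g. s (g, \<lambda>_. 0))"

definition embG :: "('g \<Rightarrow> 'k::zero) \<Rightarrow> 'g grp \<Rightarrow> 'k" where
  "embG a x = (if snd x = (\<lambda>_. 0) then a (fst x) else 0)"

definition coeffx :: "('g grp \<Rightarrow> 'k) \<Rightarrow> (nat \<Rightarrow> int) \<Rightarrow> 'g \<Rightarrow> 'k" where
  "coeffx Phi k = (\<lambda>g. Phi (g, k))"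

definition xmono :: "('g \<Rightarrow> 'k::zero) \<Rightarrow> (nat \<Rightarrow> int) \<Rightarrow> 'g grp \<Rightarrow> 'k" where
  "xmono a b x = (if snd x = b then a (fst x) else 0)"

definition zsmul :: "int \<Rightarrow> 'g::ab_group_add \<Rightarrow> 'g" where
  "zsmul k g = (if 0 \<le> k then (\<Sum>_<nat k. g) else - (\<Sum>_<nat (- k). g))"

definition init_exp :: "('g \<Rightarrow> 'g \<Rightarrow> bool) \<Rightarrow> ('g \<Rightarrow> 'k::zero) \<Rightarrow> 'g" where
  "init_exp le a = (THE g. g \<in> supp a \<and> (\<forall>h\<in>supp a. le g h))"

definition det_n :: "nat \<Rightarrow> (nat \<Rightarrow> nat \<Rightarrow> int) \<Rightarrow> int" where
  "det_n n B = (\<Sum>p | p permutes {..<n}. sign p * (\<Prod>i<n. B i (p i)))"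

definition brow :: "nat \<Rightarrow> (nat \<Rightarrow> nat \<Rightarrow> int) \<Rightarrow> nat \<Rightarrow> nat \<Rightarrow> int" where
  "brow n B i = (\<lambda>j. if j < n then B i j else 0)"

text \<open>The endomorphism f of G (+) H: fixes G, e_i maps to g_i + sum_j b_ij e_j.\<close>
definition fmap :: "nat \<Rightarrow> (nat \<Rightarrow> 'g::ab_group_add) \<Rightarrow> (nat \<Rightarrow> nat \<Rightarrow> int) \<Rightarrow> 'g grp \<Rightarrow> 'g grp" where
  "fmap n gs B x = (fst x + (\<Sum>i<n. zsmul (snd x i) (gs i)),
                    \<lambda>j. \<Sum>i<n. snd x i * brow n B i j)"

definition le_f :: "('g grp \<Rightarrow> 'g grp \<Rightarrow> bool) \<Rightarrow> nat \<Rightarrow> (nat \<Rightarrow> 'g::ab_group_add) \<Rightarrow> (nat \<Rightarrow> nat \<Rightarrow> int) \<Rightarrow> 'g grp \<Rightarrow> 'g grp \<Rightarrow> bool" where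
  "le_f le n gs B x y = le (fmap n gs B x) (fmap n gs B y)"

text \<open>CT_{f_1..f_n} Phi(f_1..f_n) is by definition the coefficient phi_0 of Phi.\<close>
definition CT_f :: "('g grp \<Rightarrow> 'k) \<Rightarrow> 'g \<Rightarrow> 'k" where
  "CT_f Phi = coeffx Phi (\<lambda>_. 0)"

end

theory Submission
  imports Defs "HOL-Library.Function_Algebras" "HOL-Library.Product_Plus" "HOL-Library.Infinite_Set"
begin

text \<open>Let \<open>g\<^sub>i\<close> be the least exponent of \<open>a\<^sub>i\<close> and let \<open>S\<close> collect the positive offsets
  \<open>h - g\<^sub>i\<close> of all exponents \<open>h\<close> of the \<open>a\<^sub>i\<close>. By Neumann's lemma the monoid \<open>M\<close> generated by \<open>S\<close>
  is well-ordered and each of its elements is a sum of elements of \<open>S\<close> in only finitely many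
  ways, so the geometric series inverts each \<open>a\<^sub>i\<close>, with support in \<open>M - g\<^sub>i\<close>. Consequently the
  term \<open>\<phi>\<^sub>k f\<^sup>k\<close> of \<open>\<Phi>(f)\<close> is an \<open>x\<close>-monomial of degree \<open>k B\<close> whose support lies in
  \<open>\<^bold>f(supp \<Phi>) + M\<close>. This set is well-ordered because \<open>\<Phi>\<close> is a series for \<open>\<le>\<^sup>f\<close>, and
  \<open>k \<mapsto> k B\<close> is injective because \<open>det B \<noteq> 0\<close>. Hence the terms form a summable family, distinct
  terms live in distinct \<open>x\<close>-degrees, and only \<open>k = 0\<close> contributes to the constant term.\<close>

lemma well_ordered_on_image:
  assumes "well_ordered_on (\<lambda>x y. le (h x) (h y)) S"
  shows "well_ordered_on le (h ` S)"
  unfolding well_ordered_on_def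
proof (intro allI impI)
  fix T assume T: "T \<subseteq> h ` S" "T \<noteq> {}"
  let ?T = "{x\<in>S. h x \<in> T}"
  have "?T \<subseteq> S" "?T \<noteq> {}" using T by auto
  then obtain m where "m \<in> ?T" "\<forall>t\<in>?T. le (h m) (h t)"
    using assms unfolding well_ordered_on_def by blast
  then show "\<exists>m\<in>T. \<forall>t\<in>T. le m t" using T by blast
qed

lemma well_ordered_on_subset: "well_ordered_on le S \<Longrightarrow> T \<subseteq> S \<Longrightarrow> well_ordered_on le T"
  unfolding well_ordered_on_def by blast

lemma well_ordered_on_empty: "well_ordered_on le {}"
  unfolding well_ordered_on_def by simp

lemma well_ordered_on_singleton: "le x x \<Longrightarrow> well_ordered_on le {x}"
  unfolding well_ordered_on_def subset_singleton_iff by auto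

lemma well_ordered_on_least:
  "well_ordered_on le A \<Longrightarrow> A \<noteq> {} \<Longrightarrow> \<exists>m\<in>A. \<forall>x\<in>A. le m x"
  unfolding well_ordered_on_def by blast

definition setsum :: "'a::plus set \<Rightarrow> 'a set \<Rightarrow> 'a set" where
  "setsum A B = {a + b | a b. a \<in> A \<and> b \<in> B}"

definition finite_sums :: "'a::monoid_add set \<Rightarrow> 'a set" where
  "finite_sums S = {sum_list L | L. L \<in> lists S}"

lemma finite_sums_mono: "S \<subseteq> S' \<Longrightarrow> finite_sums S \<subseteq> finite_sums S'"
  unfolding finite_sums_def by (auto dest: lists_mono[THEN subsetD])

lemma finite_sums_add: "x \<in> finite_sums S \<Longrightarrow> y \<in> finite_sums S \<Longrightarrow> x + y \<in> finite_sums S"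
  unfolding finite_sums_def mem_Collect_eq by (metis append_in_lists_conv sum_list_append)

lemma zero_in_finite_sums: "0 \<in> finite_sums S"
  unfolding finite_sums_def by (force intro!: exI[where x = "[]"])

lemma in_finite_sums: "s \<in> S \<Longrightarrow> s \<in> finite_sums S"
  unfolding finite_sums_def by (force intro!: exI[where x = "[s]"])

locale ordered_ab_group_on =
  fixes C :: "'a::ab_group_add set" and le :: "'a \<Rightarrow> 'a \<Rightarrow> bool"
  assumes zero_in: "0 \<in> C" and add_in: "x \<in> C \<Longrightarrow> y \<in> C \<Longrightarrow> x + y \<in> C"
    and uminus_in: "x \<in> C \<Longrightarrow> - x \<in> C"
    and refl: "a \<in> C \<Longrightarrow> le a a"
    and antisym: "a \<in> C \<Longrightarrow> b \<in> C \<Longrightarrow> le a b \<Longrightarrow> le b a \<Longrightarrow> a = b"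
    and trans: "a \<in> C \<Longrightarrow> b \<in> C \<Longrightarrow> c \<in> C \<Longrightarrow> le a b \<Longrightarrow> le b c \<Longrightarrow> le a c"
    and total: "a \<in> C \<Longrightarrow> b \<in> C \<Longrightarrow> le a b \<or> le b a"
    and add_right_mono: "a \<in> C \<Longrightarrow> b \<in> C \<Longrightarrow> c \<in> C \<Longrightarrow> le a b \<Longrightarrow> le (a + c) (b + c)"
begin

definition lt where "lt a b \<longleftrightarrow> le a b \<and> a \<noteq> b"

lemma add_right_le_iff: "a \<in> C \<Longrightarrow> b \<in> C \<Longrightarrow> c \<in> C \<Longrightarrow> le (a + c) (b + c) \<longleftrightarrow> le a b"
  using add_right_mono[of "a + c" "b + c" "- c"] add_right_mono[of a b c] add_in uminus_in by auto

lemma add_left_le_iff: "a \<in> C \<Longrightarrow> b \<in> C \<Longrightarrow> c \<in> C \<Longrightarrow> le (c + a) (c + b) \<longleftrightarrow> le a b"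
  using add_right_le_iff by (simp add: add.commute)

lemma lt_iff_not_le: "a \<in> C \<Longrightarrow> b \<in> C \<Longrightarrow> lt a b \<longleftrightarrow> \<not> le b a"
  unfolding lt_def using total antisym refl by metis

lemma lt_trans: "a \<in> C \<Longrightarrow> b \<in> C \<Longrightarrow> c \<in> C \<Longrightarrow> lt a b \<Longrightarrow> lt b c \<Longrightarrow> lt a c"
  unfolding lt_def using trans antisym by metis

lemma lt_le_trans: "a \<in> C \<Longrightarrow> b \<in> C \<Longrightarrow> c \<in> C \<Longrightarrow> lt a b \<Longrightarrow> le b c \<Longrightarrow> lt a c"
  unfolding lt_def using trans antisym by metis

lemma add_le_add:
  assumes "a \<in> C" "b \<in> C" "c \<in> C" "d \<in> C" "le a b" "le c d"
  shows "le (a + c) (b + d)"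
proof -
  have "le (a + c) (b + c)" "le (b + c) (b + d)"
    using add_right_mono add_left_le_iff assms by blast+
  then show ?thesis using trans add_in assms by blast
qed

lemma add_lt_le:
  assumes C: "a \<in> C" "b \<in> C" "c \<in> C" "d \<in> C" and "lt a b" "le c d"
  shows "lt (a + c) (b + d)"
proof -
  have "a + c \<noteq> b + d"
  proof
    assume e: "a + c = b + d"
    have "le (a + c) (b + c)" using add_right_mono C \<open>lt a b\<close> unfolding lt_def by blast
    then have "le d c" using add_left_le_iff C e by simp
    then have "c = d" using antisym C \<open>le c d\<close> by blast
    then show False using e \<open>lt a b\<close> unfolding lt_def by simp
  qed
  then show ?thesis using add_le_add C \<open>lt a b\<close> \<open>le c d\<close> unfolding lt_def by blast
qed

lemma add_le_lt: "a \<in> C \<Longrightarrow> b \<in> C \<Longrightarrow> c \<in> C \<Longrightarrow> d \<in> C \<Longrightarrow> le a b \<Longrightarrow> lt c d \<Longrightarrow> lt (a + c) (b + d)"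
  using add_lt_le[of c d a b] by (simp add: add.commute)

lemma descending_seq_lt:
  assumes "\<forall>i. f i \<in> C" "\<forall>i. lt (f (Suc i)) (f i)" "i < j"
  shows "lt (f j) (f i)"
  using assms(3)
proof (induction j)
  case (Suc j)
  show ?case
  proof (cases "i = j")
    case False
    then have "lt (f j) (f i)" using Suc by simp
    then show ?thesis using lt_trans assms by blast
  qed (use assms in simp)
qed simp

lemma ascending_seq_le:
  assumes "\<forall>i. f i \<in> C" "\<forall>i. le (f i) (f (Suc i))" "i \<le> j"
  shows "le (f i) (f j)"
  using assms(3)
proof (induction j)
  case (Suc j)
  show ?case
  proof (cases "i = Suc j")
    case False
    then have "le (f i) (f j)" using Suc by simp
    then show ?thesis using trans assms by blast
  qed (use refl assms in simp)
qed (use refl assms in simp)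

lemma well_ordered_on_iff_no_descending_seq:
  assumes "S \<subseteq> C"
  shows "well_ordered_on le S \<longleftrightarrow> \<not> (\<exists>f. \<forall>i. f i \<in> S \<and> lt (f (Suc i)) (f i))"
proof
  assume wo: "well_ordered_on le S"
  show "\<not> (\<exists>f. \<forall>i. f i \<in> S \<and> lt (f (Suc i)) (f i))"
  proof
    assume "\<exists>f. \<forall>i. f i \<in> S \<and> lt (f (Suc i)) (f i)"
    then obtain f where f: "\<forall>i. f i \<in> S \<and> lt (f (Suc i)) (f i)" by blast
    have "range f \<subseteq> S" "range f \<noteq> {}" using f by auto
    then obtain m where "m \<in> range f" "\<forall>t\<in>range f. le m t"
      using wo unfolding well_ordered_on_def by blast
    then obtain i where "le (f i) (f (Suc i))" by auto
    then show False using f assms lt_iff_not_le by blast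
  qed
next
  assume nd: "\<not> (\<exists>f. \<forall>i. f i \<in> S \<and> lt (f (Suc i)) (f i))"
  show "well_ordered_on le S"
    unfolding well_ordered_on_def
  proof (intro allI impI, rule ccontr)
    fix T assume T: "T \<subseteq> S" "T \<noteq> {}" "\<not> (\<exists>m\<in>T. \<forall>t\<in>T. le m t)"
    then have "\<forall>x\<in>T. \<exists>y\<in>T. lt y x"
      using assms lt_iff_not_le by blast
    then obtain g where g: "\<forall>x\<in>T. g x \<in> T \<and> lt (g x) x" by metis
    obtain t0 where t0: "t0 \<in> T" using T by blast
    have "(g ^^ i) t0 \<in> T" for i by (induction i) (auto simp: t0 g)
    then have "\<forall>i. (g ^^ i) t0 \<in> S \<and> lt ((g ^^ Suc i) t0) ((g ^^ i) t0)"
      using g T by auto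
    then have "\<exists>f. \<forall>i. f i \<in> S \<and> lt (f (Suc i)) (f i)"
      by (rule exI[where x = "\<lambda>i. (g ^^ i) t0"])
    then show False using nd by blast
  qed
qed

lemma well_ordered_on_ascending_subseq:
  fixes f :: "nat \<Rightarrow> 'a"
  assumes S: "S \<subseteq> C" "well_ordered_on le S" and f: "\<forall>i. f i \<in> S"
  shows "\<exists>r :: nat \<Rightarrow> nat. strict_mono r \<and> (\<forall>i j. i \<le> j \<longrightarrow> le (f (r i)) (f (r j)))"
proof -
  have "\<exists>j\<ge>m. \<forall>j'\<ge>m. le (f j) (f j')" for m
  proof -
    have "f ` {m..} \<subseteq> S" "f ` {m..} \<noteq> {}" using f by auto
    then obtain x where "x \<in> f ` {m..}" "\<forall>t\<in>f ` {m..}. le x t"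
      using S unfolding well_ordered_on_def by blast
    then show ?thesis by auto
  qed
  then have "\<exists>least_after. \<forall>m. least_after m \<ge> m \<and> (\<forall>j'\<ge>m. le (f (least_after m)) (f j'))"
    by (rule choice[OF allI])
  then obtain least_after
    where least_after: "\<And>m. least_after m \<ge> m" "\<And>m j'. j' \<ge> m \<Longrightarrow> le (f (least_after m)) (f j')"
    by blast
  define r where "r = rec_nat (least_after 0) (\<lambda>_ p. least_after (Suc p))"
  have r_Suc: "r (Suc k) = least_after (Suc (r k))" for k by (simp add: r_def)
  have r_less: "r k < r (Suc k)" for k using least_after(1)[of "Suc (r k)"] r_Suc[of k] by simp
  have "le (f (r k)) (f j)" if "j > r k" for j k
  proof (cases k)
    case 0 then show ?thesis using least_after(2)[of 0] by (simp add: r_def)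
  next
    case (Suc k')
    then have "Suc (r k') \<le> j" using least_after(1)[of "Suc (r k')"] r_Suc[of k'] that by simp
    then show ?thesis using least_after(2)[of "Suc (r k')" j] r_Suc[of k'] Suc by simp
  qed
  then have asc: "\<forall>k. le (f (r k)) (f (r (Suc k)))" using r_less by blast
  have C: "\<forall>k. f (r k) \<in> C" using f S by blast
  have "le (f (r i)) (f (r j))" if "i \<le> j" for i j
    using ascending_seq_le[of "\<lambda>k. f (r k)" i j] C asc that by simp
  moreover have "strict_mono r" using r_less by (simp add: strict_mono_Suc_iff)
  ultimately show ?thesis by (intro exI[of _ r]) simp
qed

lemma well_ordered_on_Un:
  assumes "well_ordered_on le A" "well_ordered_on le B" "A \<subseteq> C" "B \<subseteq> C"
  shows "well_ordered_on le (A \<union> B)"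
  unfolding well_ordered_on_iff_no_descending_seq[OF Un_least[OF assms(3,4)]]
proof
  assume "\<exists>f. \<forall>i. f i \<in> A \<union> B \<and> lt (f (Suc i)) (f i)"
  then obtain f where f: "\<forall>i. f i \<in> A \<union> B" "\<forall>i. lt (f (Suc i)) (f i)" by blast
  have fC: "\<forall>i. f i \<in> C" using f assms by blast
  \<comment> \<open>one of \<open>A\<close>, \<open>B\<close> contains infinitely many terms, which enumerate a descending sequence in it\<close>
  have "{i. f i \<in> A} \<union> {i. f i \<in> B} = UNIV" using f(1) by blast
  then have "\<not> (finite {i. f i \<in> A} \<and> finite {i. f i \<in> B})"
    by (simp flip: finite_Un)
  then obtain X where X: "X = A \<or> X = B" "infinite {i. f i \<in> X}" by blast
  obtain r :: "nat \<Rightarrow> nat" where r: "strict_mono r" "\<forall>k. r k \<in> {i. f i \<in> X}"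
    using infinite_enumerate[OF X(2)] by blast
  have "lt (f (r (Suc k))) (f (r k))" for k
    using descending_seq_lt[OF fC f(2)] r(1) by (simp add: strict_mono_def)
  then have "\<exists>g. \<forall>k. g k \<in> X \<and> lt (g (Suc k)) (g k)"
    using r(2) by (intro exI[where x = "\<lambda>k. f (r k)"]) simp
  moreover have "X \<subseteq> C" "well_ordered_on le X" using X(1) assms by auto
  ultimately show False using well_ordered_on_iff_no_descending_seq[of X] by blast
qed

lemma well_ordered_on_UN:
  "(\<And>i. i < (n::nat) \<Longrightarrow> well_ordered_on le (A i) \<and> A i \<subseteq> C) \<Longrightarrow> well_ordered_on le (\<Union>i<n. A i)"
proof (induction n)
  case 0 then show ?case by (simp add: well_ordered_on_empty)
next
  case (Suc n)
  have "(\<Union>i<Suc n. A i) = (\<Union>i<n. A i) \<union> A n" by (auto simp: lessThan_Suc)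
  moreover have "well_ordered_on le (\<Union>i<n. A i)" "(\<Union>i<n. A i) \<subseteq> C"
    using Suc less_SucI by blast+
  ultimately show ?case using well_ordered_on_Un[of "\<Union>i<n. A i" "A n"] Suc.prems by simp
qed

lemma finite_sum_decompositions:
  assumes A: "A \<subseteq> C" "well_ordered_on le A" and B: "B \<subseteq> C" "well_ordered_on le B"
  shows "finite {(a, b). a \<in> A \<and> b \<in> B \<and> a + b = c}"
proof (rule ccontr)
  assume "infinite {(a, b). a \<in> A \<and> b \<in> B \<and> a + b = c}"
  then have "\<exists>f :: nat \<Rightarrow> _. inj f \<and> range f \<subseteq> {(a, b). a \<in> A \<and> b \<in> B \<and> a + b = c}"
    by (simp only: infinite_iff_countable_subset)
  then obtain f :: "nat \<Rightarrow> _" where f: "inj f" "range f \<subseteq> {(a, b). a \<in> A \<and> b \<in> B \<and> a + b = c}"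
    by blast
  have "f i \<in> {(a, b). a \<in> A \<and> b \<in> B \<and> a + b = c}" for i by (rule subsetD[OF f(2) rangeI])
  then have fA: "\<forall>i. fst (f i) \<in> A" and fB: "\<forall>i. snd (f i) \<in> B" and fc: "\<forall>i. fst (f i) + snd (f i) = c"
    by (auto simp: case_prod_beta)
  obtain r :: "nat \<Rightarrow> nat" where r: "strict_mono r" "\<forall>i j. i \<le> j \<longrightarrow> le (fst (f (r i))) (fst (f (r j)))"
    using well_ordered_on_ascending_subseq[OF A fA] by blast
  \<comment> \<open>along an ascending subsequence of first components, the second components must descend\<close>
  have "lt (snd (f (r (Suc i)))) (snd (f (r i)))" for i
  proof -
    let ?a = "fst (f (r i))" and ?a' = "fst (f (r (Suc i)))"
    let ?b = "snd (f (r i))" and ?b' = "snd (f (r (Suc i)))"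
    have C: "?a \<in> C" "?a' \<in> C" "?b \<in> C" "?b' \<in> C" using fA fB A B by auto
    have "f (r i) \<noteq> f (r (Suc i))" using f(1) r(1) by (simp add: inj_eq strict_mono_eq)
    moreover have "?a + ?b = ?a' + ?b'" using fc by simp
    ultimately have "?a \<noteq> ?a'" by (auto simp: prod_eq_iff)
    then have "lt ?a ?a'" using r unfolding lt_def by simp
    have "\<not> le ?b ?b'"
    proof
      assume "le ?b ?b'"
      then have "lt (?a + ?b) (?a' + ?b')" using add_lt_le[OF C \<open>lt ?a ?a'\<close>] by blast
      then show False using fc unfolding lt_def by simp
    qed
    then show ?thesis using lt_iff_not_le C by blast
  qed
  then have "\<exists>g. \<forall>i. g i \<in> B \<and> lt (g (Suc i)) (g i)"
    using fB by (intro exI[where x = "\<lambda>i. snd (f (r i))"]) simp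
  then show False using well_ordered_on_iff_no_descending_seq[OF B(1)] B(2) by blast
qed

lemma setsum_in: "A \<subseteq> C \<Longrightarrow> B \<subseteq> C \<Longrightarrow> setsum A B \<subseteq> C"
  unfolding setsum_def using add_in by auto

lemma well_ordered_on_setsum:
  assumes A: "A \<subseteq> C" "well_ordered_on le A" and B: "B \<subseteq> C" "well_ordered_on le B"
  shows "well_ordered_on le (setsum A B)"
  unfolding well_ordered_on_iff_no_descending_seq[OF setsum_in[OF A(1) B(1)]]
proof
  assume "\<exists>f. \<forall>i. f i \<in> setsum A B \<and> lt (f (Suc i)) (f i)"
  then obtain f where f: "\<forall>i. f i \<in> setsum A B" "\<forall>i. lt (f (Suc i)) (f i)" by blast
  have "\<forall>i. \<exists>a b. a \<in> A \<and> b \<in> B \<and> f i = a + b" using f(1) unfolding setsum_def by blast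
  then obtain a b where ab: "\<forall>i. a i \<in> A \<and> b i \<in> B \<and> f i = a i + b i" by metis
  obtain r :: "nat \<Rightarrow> nat" where r: "strict_mono r" "\<forall>i j. i \<le> j \<longrightarrow> le (a (r i)) (a (r j))"
    using well_ordered_on_ascending_subseq[OF A, of a] ab by blast
  have fC: "\<forall>i. f i \<in> C" using f setsum_in[OF A(1) B(1)] by blast
  \<comment> \<open>along an ascending subsequence of the \<open>a i\<close>, the \<open>b i\<close> must descend\<close>
  have "lt (b (r (Suc i))) (b (r i))" for i
  proof (rule ccontr)
    have C: "a (r i) \<in> C" "a (r (Suc i)) \<in> C" "b (r i) \<in> C" "b (r (Suc i)) \<in> C"
      using ab A B by auto
    assume "\<not> lt (b (r (Suc i))) (b (r i))"
    then have "le (b (r i)) (b (r (Suc i)))" using lt_iff_not_le C by blast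
    then have "le (f (r i)) (f (r (Suc i)))"
      using add_le_add[OF C] r(2) ab by simp
    moreover have "lt (f (r (Suc i))) (f (r i))"
      using descending_seq_lt[OF fC f(2)] r(1) by (simp add: strict_mono_def)
    ultimately show False using lt_iff_not_le fC by blast
  qed
  then have "\<exists>g. \<forall>i. g i \<in> B \<and> lt (g (Suc i)) (g i)"
    using ab by (intro exI[where x = "\<lambda>i. b (r i)"]) simp
  then show False using well_ordered_on_iff_no_descending_seq[OF B(1)] B(2) by blast
qed

end

definition rel_chain :: "'b set \<Rightarrow> ('b \<Rightarrow> 'b \<Rightarrow> bool) \<Rightarrow> (nat \<Rightarrow> 'b) \<Rightarrow> bool" where
  "rel_chain A R f \<longleftrightarrow> (\<forall>i. f i \<in> A) \<and> (\<forall>i j. i < j \<longrightarrow> R (f i) (f j))"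

lemma rel_chain_if_prefixes_extend:
  assumes "\<And>k. \<exists>g. rel_chain A R g \<and> (\<forall>i<k. g i = m i)"
  shows "rel_chain A R m"
  unfolding rel_chain_def
proof (intro conjI allI impI)
  fix i
  obtain g where "rel_chain A R g" "\<forall>i'<Suc i. g i' = m i'" using assms by blast
  then show "m i \<in> A" unfolding rel_chain_def by (metis lessI)
next
  fix i j :: nat assume "i < j"
  obtain g where "rel_chain A R g" "\<forall>i'<Suc j. g i' = m i'" using assms by blast
  then show "R (m i) (m j)" unfolding rel_chain_def using \<open>i < j\<close> by (metis less_SucI lessI)
qed

text \<open>Nash-Williams' minimal bad sequence: \<open>m\<close> is built term by term, each time choosing the
  smallest possible next term among the chains that extend the prefix chosen so far.\<close>

lemma minimal_rel_chain:
  fixes sz :: "'b \<Rightarrow> nat"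
  assumes "rel_chain A R f"
  shows "\<exists>m. rel_chain A R m \<and>
    (\<forall>g k. rel_chain A R g \<and> (\<forall>i<k. g i = m i) \<longrightarrow> sz (m k) \<le> sz (g k))"
proof -
  define E where "E p = {g. rel_chain A R g \<and> (\<forall>i<length p. g i = p ! i)}" for p
  define best where "best p = arg_min (\<lambda>g. sz (g (length p))) (\<lambda>g. g \<in> E p)" for p
  have best: "best p \<in> E p" "\<And>g. g \<in> E p \<Longrightarrow> sz (best p (length p)) \<le> sz (g (length p))"
    if "E p \<noteq> {}" for p
    using that arg_min_nat_lemma[of "\<lambda>g. g \<in> E p" _ "\<lambda>g. sz (g (length p))"]
    unfolding best_def by blast+
  define pre where "pre = rec_nat [] (\<lambda>_ p. p @ [best p (length p)])"
  have pre_Suc: "pre (Suc k) = pre k @ [best (pre k) (length (pre k))]" for k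
    by (simp add: pre_def)
  have pre: "length (pre k) = k \<and> E (pre k) \<noteq> {}" for k
  proof (induction k)
    case 0 then show ?case using assms by (auto simp: pre_def E_def)
  next
    case (Suc k)
    then have "best (pre k) \<in> E (pre k)" using best(1) by blast
    then have "best (pre k) \<in> E (pre (Suc k))"
      using Suc by (auto simp: pre_Suc E_def nth_append less_Suc_eq)
    then show ?case using Suc pre_Suc by auto
  qed
  define m where "m k = pre (Suc k) ! k" for k
  have pre_nth: "pre k ! i = m i" if "i < k" for i k
    using that
  proof (induction k)
    case (Suc k)
    then show ?case using pre[of k] by (cases "i = k") (auto simp: pre_Suc nth_append m_def)
  qed simp
  have "\<exists>g. rel_chain A R g \<and> (\<forall>i<k. g i = m i)" for k
    using pre[of k] pre_nth unfolding E_def by auto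
  then have "rel_chain A R m" by (rule rel_chain_if_prefixes_extend)
  moreover have "sz (m k) \<le> sz (g k)" if "rel_chain A R g" "\<forall>i<k. g i = m i" for g k
  proof -
    have "g \<in> E (pre k)" using that pre[of k] pre_nth unfolding E_def by auto
    moreover have "m k = best (pre k) k" using pre[of k] by (simp add: m_def pre_Suc nth_append)
    ultimately show ?thesis using best(2)[of "pre k"] pre[of k] by auto
  qed
  ultimately show ?thesis by blast
qed

context ordered_ab_group_on
begin

lemma sum_list_in: "L \<in> lists C \<Longrightarrow> sum_list L \<in> C"
  by (induction L) (auto simp: zero_in add_in)

lemma finite_sums_in: "S \<subseteq> C \<Longrightarrow> finite_sums S \<subseteq> C"
  unfolding finite_sums_def using sum_list_in lists_mono[of S C] by blast

lemma sum_list_pos: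
  assumes "\<forall>s\<in>S. lt 0 s" "S \<subseteq> C" "L \<in> lists S" "L \<noteq> []"
  shows "lt 0 (sum_list L)"
  using assms(3,4)
proof (induction L rule: list.induct)
  case (Cons s L)
  from Cons.prems have "s \<in> S" "L \<in> lists S" by auto
  then have s: "lt 0 s" "s \<in> C" and "L \<in> lists C" using assms(1,2) lists_mono[OF assms(2)] by auto
  then have L: "sum_list L \<in> C" using sum_list_in by blast
  show ?case
  proof (cases "L = []")
    case True then show ?thesis using s by simp
  next
    case False
    then have "le 0 (sum_list L)" using Cons unfolding lt_def by simp
    then have "lt (0 + 0) (s + sum_list L)" using add_lt_le[OF zero_in s(2) zero_in L s(1)] by blast
    then show ?thesis by simp
  qed
qed simp

text \<open>A chain of lists each of which \<open>descends\<close> from all earlier ones would give either a strictly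
  descending sequence of sums or infinitely many representations of one sum; excluding such chains
  proves both halves of Neumann's lemma at once.\<close>

definition descends :: "'a list \<Rightarrow> 'a list \<Rightarrow> bool" where
  "descends L L' \<longleftrightarrow> lt (sum_list L') (sum_list L) \<or> (sum_list L' = sum_list L \<and> length L < length L')"

lemma descends_lt_trans:
  assumes "L \<in> lists C" "L' \<in> lists C" "L'' \<in> lists C" "descends L L'"
    "lt (sum_list L'') (sum_list L')"
  shows "descends L L''"
proof -
  have C: "sum_list L \<in> C" "sum_list L' \<in> C" "sum_list L'' \<in> C" using assms sum_list_in by auto
  have "le (sum_list L') (sum_list L)" using assms(4) refl C unfolding descends_def lt_def by auto
  then show ?thesis using lt_le_trans C assms(5) unfolding descends_def by blast
qed

lemma descends_Cons:
  assumes C: "a \<in> C" "a' \<in> C" "L \<in> lists C" "L' \<in> lists C" and "le a a'"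
    and "descends (a # L) (a' # L')"
  shows "descends L L'"
proof -
  have S: "sum_list L \<in> C" "sum_list L' \<in> C" using C sum_list_in by auto
  show ?thesis
  proof (cases "lt (sum_list L') (sum_list L)")
    case False
    then have "le (sum_list L) (sum_list L')" using lt_iff_not_le S by blast
    then have "le (a + sum_list L) (a' + sum_list L')" using add_le_add C S \<open>le a a'\<close> by blast
    then have "a + sum_list L = a' + sum_list L' \<and> length L < length L'"
      using \<open>descends (a # L) (a' # L')\<close> lt_iff_not_le C S add_in
      unfolding descends_def by auto
    moreover have "sum_list L = sum_list L'"
    proof (rule ccontr)
      assume "sum_list L \<noteq> sum_list L'"
      then have "lt (a + sum_list L) (a' + sum_list L')"
        using add_le_lt C S \<open>le a a'\<close> \<open>le (sum_list L) (sum_list L')\<close> unfolding lt_def by blast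
      then show False using calculation unfolding lt_def by simp
    qed
    ultimately show ?thesis unfolding descends_def by simp
  qed (simp add: descends_def)
qed

lemma sum_list_tl_lt:
  assumes S: "S \<subseteq> C" "\<forall>s\<in>S. lt 0 s" and L: "L \<in> lists S" "L \<noteq> []"
  shows "lt (sum_list (tl L)) (sum_list L)"
proof -
  obtain s L' where L_eq: "L = s # L'" using L(2) by (cases L) auto
  then have "s \<in> S" "L' \<in> lists C" using L(1) lists_mono[OF S(1)] by auto
  then have "s \<in> C" "lt 0 s" "sum_list L' \<in> C" using S sum_list_in by auto
  then have "lt (0 + sum_list L') (s + sum_list L')" using add_lt_le zero_in refl by blast
  then show ?thesis using L_eq by simp
qed

lemma descends_chain_nonempty:
  assumes S: "S \<subseteq> C" "\<forall>s\<in>S. lt 0 s" and m: "rel_chain (lists S) descends m"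
  shows "m k \<noteq> []"
proof
  have mS: "m k \<in> lists S" for k using m unfolding rel_chain_def by blast
  assume "m k = []"
  then have "descends [] (m (Suc k))" using m unfolding rel_chain_def by (metis lessI)
  then have "m (Suc k) \<noteq> []" and "le (sum_list (m (Suc k))) 0"
    using refl[OF zero_in] unfolding descends_def lt_def by auto
  moreover have "sum_list (m (Suc k)) \<in> C" using mS lists_mono[OF S(1)] sum_list_in by blast
  ultimately show False using sum_list_pos[OF S(2,1) mS] lt_iff_not_le zero_in by blast
qed

lemma descends_chain_splice:
  assumes S: "S \<subseteq> C" "\<forall>s\<in>S. lt 0 s" and m: "rel_chain (lists S) descends m"
    and r: "strict_mono r" "\<And>i j. i \<le> j \<Longrightarrow> le (hd (m (r i))) (hd (m (r j)))"
  shows "rel_chain (lists S) descends (\<lambda>i. if i < r 0 then m i else tl (m (r (i - r 0))))"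
    (is "rel_chain _ _ ?g")
proof -
  have mS: "m k \<in> lists S" for k using m unfolding rel_chain_def by blast
  have m_desc: "descends (m i) (m j)" if "i < j" for i j using m that unfolding rel_chain_def by blast
  have m_Cons: "m k = hd (m k) # tl (m k)" for k using descends_chain_nonempty[OF S m] by simp
  have hd_S: "hd (m k) \<in> S" and tl_S: "tl (m k) \<in> lists S" for k
    using mS[of k] m_Cons[of k] by (metis Cons_in_lists_iff)+
  have hd_C: "hd (m k) \<in> C" and tl_C: "tl (m k) \<in> lists C" and mC: "m k \<in> lists C" for k
    using hd_S tl_S mS S(1) lists_mono[OF S(1)] by blast+
  have tl_lt: "lt (sum_list (tl (m k))) (sum_list (m k))" for k
    using sum_list_tl_lt[OF S mS descends_chain_nonempty[OF S m]] .
  have "descends (?g i) (?g j)" if "i < j" for i j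
  proof (cases "j < r 0")
    case True
    then show ?thesis using that m_desc by simp
  next
    case j: False
    show ?thesis
    proof (cases "i < r 0")
      case True
      have "r 0 \<le> r (j - r 0)" using r(1) by (simp add: strict_mono_less_eq)
      then have "descends (m i) (m (r (j - r 0)))" using True m_desc by simp
      then show ?thesis using True j descends_lt_trans[OF mC mC tl_C] tl_lt by simp
    next
      case False
      let ?p = "r (i - r 0)" and ?q = "r (j - r 0)"
      have "?p < ?q" using r(1) False j that by (simp add: strict_mono_less)
      then have "descends (hd (m ?p) # tl (m ?p)) (hd (m ?q) # tl (m ?q))"
        using m_desc m_Cons by metis
      moreover have "le (hd (m ?p)) (hd (m ?q))" using r(2) that by simp
      ultimately have "descends (tl (m ?p)) (tl (m ?q))" using descends_Cons hd_C tl_C by blast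
      then show ?thesis using False j by simp
    qed
  qed
  then show ?thesis using mS tl_S unfolding rel_chain_def by simp
qed

lemma no_descends_chain:
  assumes S: "S \<subseteq> C" "well_ordered_on le S" "\<forall>s\<in>S. lt 0 s"
  shows "\<not> rel_chain (lists S) descends f"
proof
  assume "rel_chain (lists S) descends f"
  \<comment> \<open>a chain with minimal lengths, spliced with its tails along ascending heads, gets shorter\<close>
  then obtain m where m: "rel_chain (lists S) descends m"
    and m_min: "\<And>g k. rel_chain (lists S) descends g \<Longrightarrow> \<forall>i<k. g i = m i \<Longrightarrow> length (m k) \<le> length (g k)"
    using minimal_rel_chain[of "lists S" descends f length] by blast
  have "hd (m k) \<in> S" for k
    using m descends_chain_nonempty[OF S(1,3) m] unfolding rel_chain_def by (metis hd_in_set in_lists_conv_set)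
  then obtain r :: "nat \<Rightarrow> nat"
    where r: "strict_mono r" "\<And>i j. i \<le> j \<Longrightarrow> le (hd (m (r i))) (hd (m (r j)))"
    using well_ordered_on_ascending_subseq[OF S(1,2), of "\<lambda>k. hd (m k)"] by blast
  let ?g = "\<lambda>i. if i < r 0 then m i else tl (m (r (i - r 0)))"
  have "length (m (r 0)) \<le> length (?g (r 0))"
    by (rule m_min[OF descends_chain_splice[OF S(1,3) m r]]) auto
  then show False using descends_chain_nonempty[OF S(1,3) m, of "r 0"] by (cases "m (r 0)") auto
qed

lemma well_ordered_on_finite_sums:
  assumes S: "S \<subseteq> C" "well_ordered_on le S" "\<forall>s\<in>S. lt 0 s"
  shows "well_ordered_on le (finite_sums S)"
  unfolding well_ordered_on_iff_no_descending_seq[OF finite_sums_in[OF S(1)]]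
proof
  assume "\<exists>f. \<forall>i. f i \<in> finite_sums S \<and> lt (f (Suc i)) (f i)"
  then obtain f where f: "\<forall>i. f i \<in> finite_sums S" "\<forall>i. lt (f (Suc i)) (f i)" by blast
  have "\<forall>i. \<exists>L. L \<in> lists S \<and> f i = sum_list L" using f(1) unfolding finite_sums_def by blast
  then obtain L where L: "\<forall>i. L i \<in> lists S \<and> f i = sum_list (L i)" by metis
  have fC: "\<forall>i. f i \<in> C" using f(1) finite_sums_in[OF S(1)] by blast
  have "descends (L i) (L j)" if "i < j" for i j
    using descending_seq_lt[OF fC f(2) that] L unfolding descends_def by simp
  then have "rel_chain (lists S) descends L" using L unfolding rel_chain_def by blast
  then show False using no_descends_chain[OF S] by blast
qed

lemma finite_lists_length_sum:
  assumes S: "S \<subseteq> C" "well_ordered_on le S" "\<forall>s\<in>S. lt 0 s"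
  shows "finite {L \<in> lists S. length L = k \<and> sum_list L = c}"
proof (induction k arbitrary: c)
  case 0
  have "{L \<in> lists S. length L = 0 \<and> sum_list L = c} \<subseteq> {[]}" by auto
  then show ?case using finite_subset by blast
next
  case (Suc k)
  let ?P = "{(s, t). s \<in> S \<and> t \<in> finite_sums S \<and> s + t = c}"
  have "finite ?P"
    using finite_sum_decompositions[OF S(1,2) finite_sums_in[OF S(1)] well_ordered_on_finite_sums[OF S]] .
  then have "finite (\<Union>p\<in>?P. (\<lambda>L. fst p # L) ` {L \<in> lists S. length L = k \<and> sum_list L = snd p})"
    using Suc.IH by blast
  moreover have "{L \<in> lists S. length L = Suc k \<and> sum_list L = c} \<subseteq>
        (\<Union>p\<in>?P. (\<lambda>L. fst p # L) ` {L \<in> lists S. length L = k \<and> sum_list L = snd p})"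
  proof
    fix L assume L: "L \<in> {L \<in> lists S. length L = Suc k \<and> sum_list L = c}"
    then obtain s L' where "L = s # L'" by (cases L) auto
    moreover have "sum_list L' \<in> finite_sums S" using L \<open>L = s # L'\<close> unfolding finite_sums_def by auto
    ultimately show "L \<in> (\<Union>p\<in>?P. (\<lambda>L. fst p # L) ` {L \<in> lists S. length L = k \<and> sum_list L = snd p})"
      using L by force
  qed
  ultimately show ?case using finite_subset by blast
qed

lemma finite_lists_sum:
  assumes S: "S \<subseteq> C" "well_ordered_on le S" "\<forall>s\<in>S. lt 0 s"
  shows "finite {L \<in> lists S. sum_list L = c}"
proof -
  let ?N = "{length L | L. L \<in> lists S \<and> sum_list L = c}"
  have "finite ?N"
  proof (rule ccontr)
    assume "infinite ?N"
    then obtain r :: "nat \<Rightarrow> nat" where r: "strict_mono r" "\<forall>k. r k \<in> ?N"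
      using infinite_enumerate by blast
    have "\<forall>k. \<exists>L. L \<in> lists S \<and> sum_list L = c \<and> length L = r k"
    proof
      fix k show "\<exists>L. L \<in> lists S \<and> sum_list L = c \<and> length L = r k"
        using r(2)[rule_format, of k] unfolding mem_Collect_eq by metis
    qed
    then obtain L where L: "\<forall>k. L k \<in> lists S \<and> sum_list (L k) = c \<and> length (L k) = r k"
      by (metis (no_types))
    have "descends (L i) (L j)" if "i < j" for i j
      using L r(1) that unfolding descends_def by (simp add: strict_mono_less)
    then have "rel_chain (lists S) descends L" using L unfolding rel_chain_def by blast
    then show False using no_descends_chain[OF S] by blast
  qed
  then have "finite (\<Union>k\<in>?N. {L \<in> lists S. length L = k \<and> sum_list L = c})"
    using finite_lists_length_sum[OF S] by (intro finite_UN_I)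
  moreover have "{L \<in> lists S. sum_list L = c} \<subseteq> (\<Union>k\<in>?N. {L \<in> lists S. length L = k \<and> sum_list L = c})"
    by blast
  ultimately show ?thesis by (rule finite_subset[rotated])
qed

end

definition conv :: "('g::ab_group_add \<Rightarrow> 'k::field) \<Rightarrow> ('g \<Rightarrow> 'k) \<Rightarrow> 'g \<Rightarrow> 'k" where
  "conv a u g = (\<Sum>h\<in>{h. h \<in> supp a \<and> g - h \<in> supp u}. a h * u (g - h))"

definition delta :: "'g::ab_group_add \<Rightarrow> 'k::field" where
  "delta g = (if g = 0 then 1 else 0)"

lemma supp_iff: "x \<in> supp s \<longleftrightarrow> s x \<noteq> 0"
  by (simp add: supp_def)

lemma supp_delta: "supp (delta :: 'g::ab_group_add \<Rightarrow> 'k::field) = {0}"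
  by (auto simp: supp_def delta_def)

lemma supp_conv_subset: "supp (conv a u) \<subseteq> setsum (supp a) (supp u)"
proof
  fix g assume "g \<in> supp (conv a u)"
  then have "{h. h \<in> supp a \<and> g - h \<in> supp u} \<noteq> {}" unfolding supp_iff conv_def by (metis sum.empty)
  then obtain h where "h \<in> supp a" "g - h \<in> supp u" by blast
  then show "g \<in> setsum (supp a) (supp u)" unfolding setsum_def by force
qed

lemma conv_delta: "conv a delta = a"
proof
  fix g
  have e: "{h. h \<in> supp a \<and> g - h \<in> supp delta} = (if a g = 0 then {} else {g})"
    by (auto simp: supp_delta supp_iff)
  show "conv a delta g = a g" unfolding conv_def e by (simp add: delta_def)
qed

lemma conv_zero: "conv a (\<lambda>_. 0) = (\<lambda>_. 0)"
  unfolding conv_def supp_def by simp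

lemma conv_eq_sum_superset:
  assumes "finite X" "{h. h \<in> supp a \<and> g - h \<in> supp u} \<subseteq> X"
  shows "conv a u g = (\<Sum>h\<in>X. a h * u (g - h))"
  unfolding conv_def
  by (rule sum.mono_neutral_left[OF assms]) (auto simp: supp_iff)

locale ordered_ab_group = ordered_ab_group_on "UNIV :: 'g::ab_group_add set" le for le
begin

lemma finite_conv_terms:
  assumes "well_ordered_on le A" "well_ordered_on le B"
  shows "finite {h. h \<in> A \<and> g - h \<in> B}"
proof -
  have "finite {(x, y). x \<in> A \<and> y \<in> B \<and> x + y = g}"
    using finite_sum_decompositions assms by blast
  then have "finite (fst ` {(x, y). x \<in> A \<and> y \<in> B \<and> x + y = g})" by (rule finite_imageI)
  moreover have "{h. h \<in> A \<and> g - h \<in> B} \<subseteq> fst ` {(x, y). x \<in> A \<and> y \<in> B \<and> x + y = g}"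
    by (force simp: image_iff)
  ultimately show ?thesis by (rule finite_subset[rotated])
qed

lemma init_exp_least:
  assumes "a \<noteq> (\<lambda>_. 0)" "well_ordered_on le (supp a)"
  shows "init_exp le a \<in> supp a" "\<And>h. h \<in> supp a \<Longrightarrow> le (init_exp le a) h"
proof -
  have "supp a \<noteq> {}" using assms(1) unfolding supp_def by auto
  then obtain m where m: "m \<in> supp a" "\<forall>x\<in>supp a. le m x" using well_ordered_on_least assms(2) by blast
  have "\<exists>!g. g \<in> supp a \<and> (\<forall>h\<in>supp a. le g h)"
    using m antisym by (intro ex1I[of _ m]) blast+
  then have "init_exp le a \<in> supp a \<and> (\<forall>h\<in>supp a. le (init_exp le a) h)"
    unfolding init_exp_def by (rule theI')
  then show "init_exp le a \<in> supp a" "\<And>h. h \<in> supp a \<Longrightarrow> le (init_exp le a) h" by blast+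
qed

lemma conv_diff:
  assumes "well_ordered_on le (supp a)" "well_ordered_on le (supp w1)" "well_ordered_on le (supp w2)"
  shows "conv a (\<lambda>x. w1 x - w2 x) g = conv a w1 g - conv a w2 g"
proof -
  let ?X = "{h. h \<in> supp a \<and> g - h \<in> supp w1 \<union> supp w2}"
  have "finite ?X" using finite_conv_terms assms well_ordered_on_Un by blast
  moreover have "supp (\<lambda>x. w1 x - w2 x) \<subseteq> supp w1 \<union> supp w2" unfolding supp_def by auto
  ultimately have "conv a (\<lambda>x. w1 x - w2 x) g = (\<Sum>h\<in>?X. a h * (w1 (g - h) - w2 (g - h)))"
    "conv a w1 g = (\<Sum>h\<in>?X. a h * w1 (g - h))" "conv a w2 g = (\<Sum>h\<in>?X. a h * w2 (g - h))"
    by (intro conv_eq_sum_superset; blast)+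
  then show ?thesis by (simp add: right_diff_distrib sum_subtractf)
qed

text \<open>The product of the initial terms cannot cancel against any other pair of terms.\<close>

lemma conv_init_exp:
  assumes a: "a \<noteq> (\<lambda>_. 0)" "well_ordered_on le (supp a)"
    and d: "d \<noteq> (\<lambda>_. 0)" "well_ordered_on le (supp d)"
  shows "conv a d (init_exp le a + init_exp le d) = a (init_exp le a) * d (init_exp le d)"
proof -
  let ?g0 = "init_exp le a" and ?m0 = "init_exp le d"
  have "{h. h \<in> supp a \<and> (?g0 + ?m0) - h \<in> supp d} = {?g0}"
  proof (intro set_eqI iffI)
    fix h assume h: "h \<in> {h. h \<in> supp a \<and> (?g0 + ?m0) - h \<in> supp d}"
    show "h \<in> {?g0}"
    proof (rule ccontr)
      assume "h \<notin> {?g0}"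
      then have "lt ?g0 h" using init_exp_least(2)[OF a] h unfolding lt_def by auto
      then have "lt (?g0 + (?m0 - h)) (h + (?m0 - h))" using add_lt_le refl by blast
      then have "lt ((?g0 + ?m0) - h) ?m0" by (simp add: algebra_simps)
      moreover have "le ?m0 ((?g0 + ?m0) - h)" using init_exp_least(2)[OF d] h by blast
      ultimately show False using lt_iff_not_le by blast
    qed
  qed (use init_exp_least(1)[OF a] init_exp_least(1)[OF d] in simp)
  then show ?thesis unfolding conv_def by simp
qed

lemma conv_left_cancel:
  fixes a w1 w2 :: "'g \<Rightarrow> 'k::field"
  assumes a: "a \<noteq> (\<lambda>_. 0)" "well_ordered_on le (supp a)"
    and w: "well_ordered_on le (supp w1)" "well_ordered_on le (supp w2)"
    and eq: "conv a w1 = conv a w2"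
  shows "w1 = w2"
proof (rule ccontr)
  define d where "d x = w1 x - w2 x" for x
  assume "w1 \<noteq> w2"
  then have "d \<noteq> (\<lambda>_. 0)" unfolding d_def by (auto simp: fun_eq_iff)
  moreover have "supp d \<subseteq> supp w1 \<union> supp w2" unfolding d_def supp_def by auto
  then have "well_ordered_on le (supp d)" using well_ordered_on_Un well_ordered_on_subset w by blast
  ultimately have "conv a d (init_exp le a + init_exp le d) \<noteq> 0"
    using conv_init_exp[OF a] init_exp_least(1)[OF a] init_exp_least(1) unfolding supp_def by simp
  moreover have "conv a d g = 0" for g using conv_diff[OF a(2) w] eq unfolding d_def by simp
  ultimately show False by blast
qed

end

definition supp_offsets :: "('g \<Rightarrow> 'g \<Rightarrow> bool) \<Rightarrow> ('g::ab_group_add \<Rightarrow> 'k::zero) \<Rightarrow> 'g set" where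
  "supp_offsets le a = {s. s \<noteq> 0 \<and> init_exp le a + s \<in> supp a}"

text \<open>\<open>geom_coeff S h g\<close> is the coefficient of \<open>t\<^sup>g\<close> in the geometric series
  \<open>\<Sum>\<^sub>k (\<Sum>\<^sub>s\<^sub>\<in>\<^sub>S h s t\<^sup>s)\<^sup>k\<close>, obtained by expanding the powers into words over \<open>S\<close>.\<close>

definition geom_coeff :: "'g::monoid_add set \<Rightarrow> ('g \<Rightarrow> 'k::field) \<Rightarrow> 'g \<Rightarrow> 'k" where
  "geom_coeff S h g = (\<Sum>L\<in>{L \<in> lists S. sum_list L = g}. prod_list (map h L))"

lemma geom_coeff_nonzero: "geom_coeff S h g \<noteq> 0 \<Longrightarrow> g \<in> finite_sums S"
  unfolding geom_coeff_def finite_sums_def by (cases "{L \<in> lists S. sum_list L = g} = {}") auto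

lemma bij_betw_Cons_lists_sum:
  fixes g :: "'a::ab_group_add"
  shows "bij_betw (\<lambda>p. fst p # snd p)
    (SIGMA s:{s \<in> S. g - s \<in> finite_sums S}. {L \<in> lists S. sum_list L = g - s})
    {L \<in> {L \<in> lists S. sum_list L = g}. L \<noteq> []}"
proof (rule bij_betwI')
  fix L assume L: "L \<in> {L \<in> {L \<in> lists S. sum_list L = g}. L \<noteq> []}"
  then obtain s L' where L_eq: "L = s # L'" by (cases L) auto
  then have "s \<in> S" "L' \<in> lists S" "sum_list L' = g - s"
    using L by (auto simp: algebra_simps)
  moreover have "g - s \<in> finite_sums S"
    unfolding finite_sums_def mem_Collect_eq using calculation by (intro exI[of _ L']) simp
  ultimately show "\<exists>p\<in>(SIGMA s:{s \<in> S. g - s \<in> finite_sums S}. {L \<in> lists S. sum_list L = g - s}).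
      L = fst p # snd p"
    using L_eq by force
qed (auto simp: prod_eq_iff)

context ordered_ab_group
begin

lemma supp_offsets_pos:
  assumes "a \<noteq> (\<lambda>_. 0)" "well_ordered_on le (supp a)"
  shows "well_ordered_on le (supp_offsets le a)" "\<forall>s\<in>supp_offsets le a. lt 0 s"
proof -
  let ?g0 = "init_exp le a"
  have "supp_offsets le a \<subseteq> setsum (supp a) {- ?g0}"
    unfolding supp_offsets_def setsum_def by (force simp: algebra_simps)
  moreover have "well_ordered_on le (setsum (supp a) {- ?g0})"
    using well_ordered_on_setsum[OF _ assms(2) _ well_ordered_on_singleton] refl by simp
  ultimately show "well_ordered_on le (supp_offsets le a)" using well_ordered_on_subset by blast
  show "\<forall>s\<in>supp_offsets le a. lt 0 s"
  proof
    fix s assume s: "s \<in> supp_offsets le a"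
    then have "le (?g0 + 0) (?g0 + s)" using init_exp_least(2)[OF assms] unfolding supp_offsets_def by simp
    then have "le 0 s" using add_left_le_iff by blast
    then show "lt 0 s" using s unfolding lt_def supp_offsets_def by auto
  qed
qed

lemma geom_coeff_rec:
  assumes S: "well_ordered_on le S" "\<forall>s\<in>S. lt 0 s"
  shows "geom_coeff S h g = delta g + (\<Sum>s\<in>{s \<in> S. g - s \<in> finite_sums S}. h s * geom_coeff S h (g - s))"
proof -
  let ?T = "{s \<in> S. g - s \<in> finite_sums S}"
  define Lg where "Lg g = {L \<in> lists S. sum_list L = g}" for g
  have fin_Lg: "finite (Lg g)" for g unfolding Lg_def using finite_lists_sum S by blast
  have fin_T: "finite ?T" using finite_conv_terms[OF S(1) well_ordered_on_finite_sums] S by simp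
  have "{L \<in> Lg g. L = []} = (if g = 0 then {[]} else {})" unfolding Lg_def by auto
  then have "(\<Sum>L\<in>{L \<in> Lg g. L = []}. prod_list (map h L)) = delta g" by (simp add: delta_def)
  moreover have "(\<Sum>L\<in>{L \<in> Lg g. L \<noteq> []}. prod_list (map h L))
      = (\<Sum>p\<in>(SIGMA s:?T. Lg (g - s)). h (fst p) * prod_list (map h (snd p)))"
    using sum.reindex_bij_betw[OF bij_betw_Cons_lists_sum, of "\<lambda>L. prod_list (map h L)" S g]
    unfolding Lg_def by simp
  moreover have "\<dots> = (\<Sum>s\<in>?T. h s * geom_coeff S h (g - s))"
    using sum.Sigma[where B = "\<lambda>s. Lg (g - s)" and g = "\<lambda>s L. h s * prod_list (map h L)", OF fin_T] fin_Lg
    by (simp add: case_prod_beta geom_coeff_def Lg_def sum_distrib_left)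
  moreover have "geom_coeff S h g
      = (\<Sum>L\<in>{L \<in> Lg g. L = []} \<union> {L \<in> Lg g. L \<noteq> []}. prod_list (map h L))"
    unfolding geom_coeff_def Lg_def by (rule sum.cong) auto
  moreover have "\<dots> = (\<Sum>L\<in>{L \<in> Lg g. L = []}. prod_list (map h L))
      + (\<Sum>L\<in>{L \<in> Lg g. L \<noteq> []}. prod_list (map h L))"
    using fin_Lg[of g] by (intro sum.union_disjoint) auto
  ultimately show ?thesis by simp
qed

end

context ordered_ab_group
begin

text \<open>Writing \<open>a = c\<^sub>0 t\<^sup>g\<^sup>0 (1 - \<Sum>\<^sub>s h s t\<^sup>s)\<close> with \<open>s\<close> ranging over the positive offsets,
  the inverse is \<open>c\<^sub>0\<^sup>-\<^sup>1 t\<^sup>-\<^sup>g\<^sup>0\<close> times the geometric series.\<close>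

lemma conv_geom_coeff_inverse:
  fixes a :: "'g \<Rightarrow> 'k::field"
  assumes a: "a \<noteq> (\<lambda>_. 0)" "well_ordered_on le (supp a)"
  defines "g0 \<equiv> init_exp le a" and "S \<equiv> supp_offsets le a"
  defines "h \<equiv> \<lambda>s. - a (g0 + s) / a g0"
  shows "conv a (\<lambda>x. geom_coeff S h (x + g0) / a g0) = delta" (is "conv a ?u = _")
proof
  fix g
  have c0: "a g0 \<noteq> 0" using init_exp_least(1)[OF a] unfolding g0_def supp_def by simp
  have S: "well_ordered_on le S" "\<forall>s\<in>S. lt 0 s" using supp_offsets_pos[OF a] unfolding S_def by auto
  define T where "T = {s \<in> S. g - s \<in> finite_sums S}"
  have fin_T: "finite T"
    unfolding T_def using finite_conv_terms[OF S(1) well_ordered_on_finite_sums[OF _ S]] by simp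
  have g0_T: "g0 \<notin> (+) g0 ` T" using S unfolding T_def S_def supp_offsets_def by auto
  have "{x. x \<in> supp a \<and> g - x \<in> supp ?u} \<subseteq> insert g0 ((+) g0 ` T)"
  proof
    fix x assume x: "x \<in> {x. x \<in> supp a \<and> g - x \<in> supp ?u}"
    show "x \<in> insert g0 ((+) g0 ` T)"
    proof (cases "x = g0")
      case False
      have "x - g0 \<in> S" using x False unfolding S_def supp_offsets_def g0_def by simp
      moreover have "geom_coeff S h (g - x + g0) \<noteq> 0" using x unfolding supp_def by simp
      then have "g - (x - g0) \<in> finite_sums S" using geom_coeff_nonzero by (simp add: algebra_simps)
      ultimately have "x - g0 \<in> T" unfolding T_def by simp
      then show ?thesis by (force simp: image_iff)
    qed simp
  qed
  then have "conv a ?u g = (\<Sum>x\<in>insert g0 ((+) g0 ` T). a x * ?u (g - x))"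
    using fin_T by (intro conv_eq_sum_superset) simp_all
  also have "\<dots> = a g0 * ?u (g - g0) + (\<Sum>s\<in>T. a (g0 + s) * ?u (g - (g0 + s)))"
    using g0_T fin_T by (simp add: sum.reindex inj_on_def)
  also have "\<dots> = geom_coeff S h g - (\<Sum>s\<in>T. h s * geom_coeff S h (g - s))"
    using c0 by (simp add: h_def sum_negf algebra_simps)
  also have "\<dots> = delta g" using geom_coeff_rec[OF S, of h g] unfolding T_def by simp
  finally show "conv a ?u g = delta g" .
qed

lemma conv_inverse_exists:
  fixes a :: "'g \<Rightarrow> 'k::field"
  assumes a: "a \<noteq> (\<lambda>_. 0)" "well_ordered_on le (supp a)"
  shows "\<exists>u. well_ordered_on le (supp u) \<and> conv a u = delta \<and>
    (\<forall>x\<in>supp u. x + init_exp le a \<in> finite_sums (supp_offsets le a))"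
proof -
  let ?g0 = "init_exp le a" and ?S = "supp_offsets le a"
  let ?u = "\<lambda>x. geom_coeff ?S (\<lambda>s. - a (?g0 + s) / a ?g0) (x + ?g0) / a ?g0"
  have supp_u: "x + ?g0 \<in> finite_sums ?S" if "x \<in> supp ?u" for x
  proof -
    have "geom_coeff ?S (\<lambda>s. - a (?g0 + s) / a ?g0) (x + ?g0) \<noteq> 0" using that unfolding supp_def by auto
    then show ?thesis by (rule geom_coeff_nonzero)
  qed
  have "supp ?u \<subseteq> setsum (finite_sums ?S) {- ?g0}"
    unfolding setsum_def using supp_u by (force simp: algebra_simps)
  moreover have "well_ordered_on le (setsum (finite_sums ?S) {- ?g0})"
    using well_ordered_on_setsum[OF _ well_ordered_on_finite_sums _ well_ordered_on_singleton]
      supp_offsets_pos[OF a] refl by simp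
  ultimately have "well_ordered_on le (supp ?u)" using well_ordered_on_subset by blast
  then show ?thesis using conv_geom_coeff_inverse[OF a] supp_u by blast
qed

end

lemma Hn_zero: "(\<lambda>_. 0) \<in> Hn n"
  unfolding Hn_def by simp

lemma Hn_uminus: "k \<in> Hn n \<Longrightarrow> (\<lambda>j. - k j) \<in> Hn n"
  unfolding Hn_def by simp

lemma brow_in_Hn: "brow n B i \<in> Hn n"
  unfolding Hn_def brow_def by simp

lemma grp_carrier_iff: "x \<in> grp_carrier n \<longleftrightarrow> snd x \<in> Hn n"
  unfolding grp_carrier_def by (cases x) auto

lemma gadd_eq_plus: "gadd x y = x + y"
  unfolding gadd_def plus_prod_def plus_fun_def by simp

lemma supp_xmono: "supp (xmono a b) = (\<lambda>g. (g, b)) ` supp a"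
  unfolding supp_def xmono_def by (auto simp: image_iff)

lemma embG_eq_xmono: "embG p = xmono p (\<lambda>_. 0)"
  unfolding embG_def xmono_def by simp

lemma sone_eq_xmono: "(sone :: 'g::ab_group_add grp \<Rightarrow> 'k::field) = xmono delta (\<lambda>_. 0)"
  by (auto simp: fun_eq_iff sone_def xmono_def delta_def gzero_def)

lemma smult_xmono_apply:
  fixes a :: "'g::ab_group_add \<Rightarrow> 'k::field"
  shows "smult (xmono a b) v (g, k) = conv a (\<lambda>h. v (h, \<lambda>j. k j - b j)) g"
proof -
  let ?P = "{(x, y). x \<in> supp (xmono a b) \<and> y \<in> supp v \<and> gadd x y = (g, k)}"
  let ?Q = "{h. h \<in> supp a \<and> g - h \<in> supp (\<lambda>h. v (h, \<lambda>j. k j - b j))}"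
  define \<phi> where "\<phi> h = ((h, b), (g - h, \<lambda>j. k j - b j))" for h
  have bij: "bij_betw \<phi> ?Q ?P"
  proof (rule bij_betwI')
    fix h assume "h \<in> ?Q"
    then show "\<phi> h \<in> ?P" unfolding \<phi>_def supp_xmono by (auto simp: supp_def gadd_def)
  next
    fix p assume p: "p \<in> ?P"
    then obtain h y where h: "p = ((h, b), y)" "h \<in> supp a" "y \<in> supp v" "gadd (h, b) y = (g, k)"
      unfolding supp_xmono by auto
    then have "y = (g - h, \<lambda>j. k j - b j)" by (auto simp: gadd_def prod_eq_iff algebra_simps)
    then show "\<exists>h\<in>?Q. p = \<phi> h" using h unfolding \<phi>_def supp_def by auto
  qed (auto simp: \<phi>_def)
  have "smult (xmono a b) v (g, k) = (\<Sum>p\<in>?P. xmono a b (fst p) * v (snd p))"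
    unfolding smult_def by simp
  also have "\<dots> = (\<Sum>h\<in>?Q. a h * v (g - h, \<lambda>j. k j - b j))"
    using sum.reindex_bij_betw[OF bij, of "\<lambda>p. xmono a b (fst p) * v (snd p)"]
    by (simp add: \<phi>_def xmono_def)
  finally show ?thesis unfolding conv_def by simp
qed

lemma smult_xmono:
  fixes a u :: "'g::ab_group_add \<Rightarrow> 'k::field"
  shows "smult (xmono a b) (xmono u b') = xmono (conv a u) (\<lambda>j. b j + b' j)"
proof (rule ext, clarify)
  fix g k
  have "(\<lambda>j. k j - b j) = b' \<longleftrightarrow> k = (\<lambda>j. b j + b' j)" by (auto simp: fun_eq_iff algebra_simps)
  then have "(\<lambda>h. xmono u b' (h, \<lambda>j. k j - b j)) = (if k = (\<lambda>j. b j + b' j) then u else (\<lambda>_. 0))"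
    by (auto simp: xmono_def)
  then show "smult (xmono a b) (xmono u b') (g, k) = xmono (conv a u) (\<lambda>j. b j + b' j) (g, k)"
    by (simp add: smult_xmono_apply conv_zero xmono_def)
qed

locale grp_order =
  fixes n :: nat and le :: "('g::ab_group_add) grp \<Rightarrow> 'g grp \<Rightarrow> bool"
  assumes ordered: "ordered_group_on (grp_carrier n) le"
begin

sublocale GH: ordered_ab_group_on "grp_carrier n" le
proof -
  note ord = ordered[unfolded ordered_group_on_def gadd_eq_plus]
  show "ordered_ab_group_on (grp_carrier n) le"
  proof
    show "0 \<in> grp_carrier n" unfolding grp_carrier_iff zero_prod_def zero_fun_def using Hn_zero by simp
    show "x + y \<in> grp_carrier n" if "x \<in> grp_carrier n" "y \<in> grp_carrier n" for x y :: "'g grp"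
      using that unfolding grp_carrier_iff by (simp add: plus_fun_def Hn_def)
    show "- x \<in> grp_carrier n" if "x \<in> grp_carrier n" for x :: "'g grp"
      using that unfolding grp_carrier_iff by (simp add: Hn_def)
  qed (use ord in blast)+
qed

lemma in_grp_carrier: "k \<in> Hn n \<Longrightarrow> (g, k) \<in> grp_carrier n"
  unfolding grp_carrier_iff by simp

sublocale G: ordered_ab_group "leG le"
proof
  have C0: "(g, \<lambda>_. 0) \<in> grp_carrier n" for g :: 'g using in_grp_carrier Hn_zero by blast
  have add0: "(g, \<lambda>_. 0) + (h, \<lambda>_. 0) = (g + h, (\<lambda>_. 0::int))" for g h :: 'g
    by (simp add: plus_fun_def)
  show "leG le (a + c) (b + c)" if "leG le a b" for a b c
    using GH.add_right_mono[OF C0 C0 C0 that[unfolded leG_def]] unfolding leG_def add0 .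
  show "leG le a a" for a unfolding leG_def using GH.refl C0 by blast
  show "leG le a b \<Longrightarrow> leG le b a \<Longrightarrow> a = b" for a b unfolding leG_def using GH.antisym C0 by blast
  show "leG le a b \<Longrightarrow> leG le b c \<Longrightarrow> leG le a c" for a b c unfolding leG_def using GH.trans C0 by blast
  show "leG le a b \<or> leG le b a" for a b unfolding leG_def using GH.total C0 by blast
qed simp_all

lemma le_same_exponent_iff:
  assumes k: "k \<in> Hn n"
  shows "le (g, k) (g', k) \<longleftrightarrow> leG le g g'"
proof -
  have C: "(g, \<lambda>_. 0) \<in> grp_carrier n" "(g', \<lambda>_. 0) \<in> grp_carrier n" "(0, k) \<in> grp_carrier n"
    using in_grp_carrier Hn_zero k by blast+
  have "(g, \<lambda>_. 0) + (0, k) = (g, k)" "(g', \<lambda>_. 0) + (0, k) = (g', k)"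
    by (simp_all add: plus_fun_def)
  then show ?thesis using GH.add_right_le_iff[OF C] unfolding leG_def by simp
qed

lemma well_ordered_on_exponent_image:
  assumes k: "k \<in> Hn n" and "well_ordered_on (leG le) A"
  shows "well_ordered_on le ((\<lambda>g. (g, k)) ` A)"
proof (rule well_ordered_on_image)
  have "(\<lambda>x y. le (x, k) (y, k)) = leG le" using le_same_exponent_iff[OF k] by (intro ext) simp
  then show "well_ordered_on (\<lambda>x y. le (x, k) (y, k)) A" using assms(2) by simp
qed

lemma well_ordered_on_exponent_slice:
  assumes k: "k \<in> Hn n" and w: "well_ordered_on le V"
  shows "well_ordered_on (leG le) {g. (g, k) \<in> V}"
  unfolding well_ordered_on_def
proof (intro allI impI)
  fix T assume T: "T \<subseteq> {g. (g, k) \<in> V}" "T \<noteq> {}"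
  have "(\<lambda>g. (g, k)) ` T \<subseteq> V" "(\<lambda>g. (g, k)) ` T \<noteq> {}" using T by auto
  then obtain m where m: "m \<in> (\<lambda>g. (g, k)) ` T" "\<forall>t\<in>(\<lambda>g. (g, k)) ` T. le m t"
    using w unfolding well_ordered_on_def by blast
  then obtain g where g: "g \<in> T" "m = (g, k)" by blast
  have "\<forall>t\<in>T. leG le g t" using m g le_same_exponent_iff[OF k] by auto
  then show "\<exists>m\<in>T. \<forall>t\<in>T. leG le m t" using g by blast
qed

lemma well_ordered_on_MN_slice:
  assumes v: "v \<in> MN le (grp_carrier n)"
  shows "well_ordered_on (leG le) (supp (\<lambda>h. v (h, k)))"
proof (cases "k \<in> Hn n")
  case True
  have "supp (\<lambda>h. v (h, k)) = {h. (h, k) \<in> supp v}" unfolding supp_def by simp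
  then show ?thesis using well_ordered_on_exponent_slice[OF True] v unfolding MN_def by simp
next
  case False
  have "(h, k) \<notin> supp v" for h
  proof
    assume "(h, k) \<in> supp v"
    then have "(h, k) \<in> grp_carrier n" using v unfolding MN_def by blast
    then show False using False unfolding grp_carrier_iff by simp
  qed
  then have "supp (\<lambda>h. v (h, k)) = {}" unfolding supp_def by simp
  then show ?thesis using well_ordered_on_empty by simp
qed

text \<open>Uniqueness of inverses, needed because \<open>sinv\<close> is defined by a definite description.
  The slice of \<open>v\<close> at exponent \<open>k\<close>, multiplied by \<open>a\<close>, is the slice of \<open>x\<^sup>b v = 1\<close> at \<open>k + b\<close>.\<close>

lemma xmono_inverse_unique:
  fixes a u :: "'g \<Rightarrow> 'k::field"
  assumes a: "a \<noteq> (\<lambda>_. 0)" "well_ordered_on (leG le) (supp a)"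
    and u: "well_ordered_on (leG le) (supp u)" "conv a u = delta"
    and v: "v \<in> MN le (grp_carrier n)" "smult (xmono a b) v = sone"
  shows "v = xmono u (\<lambda>j. - b j)"
proof (rule ext, clarify)
  fix g k
  define w where "w h = v (h, k)" for h
  have conv_w: "conv a w = (if (\<lambda>j. k j + b j) = (\<lambda>_. 0) then delta else (\<lambda>_. 0))"
  proof
    fix g'
    have "conv a w g' = smult (xmono a b) v (g', \<lambda>j. k j + b j)"
      unfolding smult_xmono_apply w_def by simp
    then show "conv a w g' = (if (\<lambda>j. k j + b j) = (\<lambda>_. 0) then delta else (\<lambda>_. 0)) g'"
      unfolding v(2) sone_eq_xmono xmono_def by simp
  qed
  have wo_w: "well_ordered_on (leG le) (supp w)"
    unfolding w_def by (rule well_ordered_on_MN_slice[OF v(1)])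
  have k_iff: "(\<lambda>j. k j + b j) = (\<lambda>_. 0) \<longleftrightarrow> k = (\<lambda>j. - b j)"
    by (auto simp: fun_eq_iff add_eq_0_iff2)
  show "v (g, k) = xmono u (\<lambda>j. - b j) (g, k)"
  proof (cases "(\<lambda>j. k j + b j) = (\<lambda>_. 0)")
    case True
    then have "w = u" using G.conv_left_cancel[OF a wo_w u(1)] conv_w u(2) by simp
    then show ?thesis using True k_iff fun_cong[of w u g] unfolding xmono_def w_def by simp
  next
    case False
    have "well_ordered_on (leG le) (supp (\<lambda>_::'g. 0::'k))"
      unfolding supp_def using well_ordered_on_empty by simp
    moreover have "conv a w = conv a (\<lambda>_. 0)" using conv_w False by (simp add: conv_zero)
    ultimately have "w = (\<lambda>_. 0)" using G.conv_left_cancel[OF a wo_w] by blast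
    then show ?thesis using False k_iff fun_cong[of w "\<lambda>_. 0" g] unfolding xmono_def w_def by simp
  qed
qed

lemma sinv_xmono:
  fixes a :: "'g \<Rightarrow> 'k::field"
  assumes a: "a \<noteq> (\<lambda>_. 0)" "well_ordered_on (leG le) (supp a)" and b: "b \<in> Hn n"
  shows "\<exists>u. sinv le (grp_carrier n) (xmono a b) = xmono u (\<lambda>j. - b j) \<and>
    (\<forall>x\<in>supp u. x + init_exp (leG le) a \<in> finite_sums (supp_offsets (leG le) a))"
proof -
  obtain u where u: "well_ordered_on (leG le) (supp u)" "conv a u = delta"
    "\<forall>x\<in>supp u. x + init_exp (leG le) a \<in> finite_sums (supp_offsets (leG le) a)"
    using G.conv_inverse_exists[OF a] by blast
  have MN: "xmono u (\<lambda>j. - b j) \<in> MN le (grp_carrier n)"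
    unfolding MN_def mem_Collect_eq supp_xmono
    using well_ordered_on_exponent_image[OF Hn_uminus[OF b] u(1)] in_grp_carrier[OF Hn_uminus[OF b]]
    by blast
  have inv: "smult (xmono a b) (xmono u (\<lambda>j. - b j)) = sone"
    unfolding smult_xmono u(2) sone_eq_xmono by simp
  have "sinv le (grp_carrier n) (xmono a b) = xmono u (\<lambda>j. - b j)"
    unfolding sinv_def
  proof (rule the_equality)
    fix v assume "v \<in> MN le (grp_carrier n) \<and> smult (xmono a b) v = sone"
    then show "v = xmono u (\<lambda>j. - b j)" using xmono_inverse_unique[OF a u(1,2)] by blast
  qed (use MN inv in simp)
  then show ?thesis using u(3) by blast
qed

end

lemma det_n_equal_rows:
  fixes M :: "nat \<Rightarrow> nat \<Rightarrow> int"
  assumes rl: "r < n" "l < n" "r \<noteq> l" and eq: "\<forall>j<n. M r j = M l j"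
  shows "det_n n M = 0"
proof -
  let ?P = "{p. p permutes {..<n}}"
  let ?t = "transpose r l"
  define f where "f p = sign p * (\<Prod>i<n. M i (p i))" for p
  have tP: "?t permutes {..<n}" using rl by (simp add: permutes_swap_id)
  have bij: "bij_betw (\<lambda>p. p \<circ> ?t) ?P ?P"
    by (rule bij_betwI[where g = "\<lambda>p. p \<circ> ?t"]) (auto simp: comp_assoc permutes_compose[OF tP])
  \<comment> \<open>composing with the transposition flips the sign and, as rows \<open>r\<close> and \<open>l\<close> agree, fixes the product\<close>
  have "f (p \<circ> ?t) = - f p" if p: "p \<in> ?P" for p
  proof -
    have "permutation p" "permutation ?t"
      using p tP permutation_permutes finite_lessThan by blast+
    then have "sign (p \<circ> ?t) = sign p * (sign ?t :: int)" by (rule sign_compose)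
    moreover have "sign ?t = (- 1 :: int)" using rl(3) sign_swap_id[of r l] by simp
    ultimately have "sign (p \<circ> ?t) = - (sign p :: int)" by simp
    moreover have "(\<Prod>i<n. M i ((p \<circ> ?t) i)) = (\<Prod>i<n. M (?t i) ((p \<circ> ?t) (?t i)))"
      using prod.reindex_bij_betw[OF permutes_imp_bij[OF tP], of "\<lambda>i. M i ((p \<circ> ?t) i)"] by simp
    moreover have "\<dots> = (\<Prod>i<n. M i (p i))"
    proof (rule prod.cong[OF refl])
      fix i assume "i \<in> {..<n}"
      then have "p i < n" using p permutes_in_image by fastforce
      then show "M (?t i) ((p \<circ> ?t) (?t i)) = M i (p i)" using eq by (auto simp: transpose_def)
    qed
    ultimately show ?thesis unfolding f_def by simp
  qed
  then have "det_n n M = (\<Sum>p\<in>?P. - f p)"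
    unfolding det_n_def f_def[symmetric] using sum.reindex_bij_betw[OF bij, of f] by simp
  then show ?thesis unfolding det_n_def f_def by (simp add: sum_negf)
qed

lemma det_n_replace_row:
  assumes "r < n"
  shows "det_n n (\<lambda>i j. if i = r then x j else B i j)
    = (\<Sum>p | p permutes {..<n}. sign p * x (p r) * (\<Prod>i\<in>{..<n} - {r}. B i (p i)))"
proof -
  have "(\<Prod>i<n. (if i = r then x (p i) else B i (p i))) = x (p r) * (\<Prod>i\<in>{..<n} - {r}. B i (p i))" for p
  proof -
    have "(\<Prod>i<n. (if i = r then x (p i) else B i (p i)))
        = x (p r) * (\<Prod>i\<in>{..<n} - {r}. (if i = r then x (p i) else B i (p i)))"
      using prod.remove[of "{..<n}" r "\<lambda>i. if i = r then x (p i) else B i (p i)"] assms by simp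
    also have "(\<Prod>i\<in>{..<n} - {r}. (if i = r then x (p i) else B i (p i))) = (\<Prod>i\<in>{..<n} - {r}. B i (p i))"
      by (rule prod.cong) auto
    finally show ?thesis .
  qed
  then show ?thesis unfolding det_n_def by (simp add: mult.assoc if_distrib)
qed

text \<open>Replace row \<open>r\<close> of \<open>B\<close> by \<open>k B = \<Sum>\<^sub>l k\<^sub>l B\<^sub>l\<close>: the determinant vanishes, and by
  multilinearity it equals \<open>k\<^sub>r det B\<close>.\<close>

lemma det_n_left_kernel:
  fixes B :: "nat \<Rightarrow> nat \<Rightarrow> int"
  assumes "det_n n B \<noteq> 0" and kB: "\<forall>j<n. (\<Sum>i<n. k i * B i j) = 0" and r: "r < n"
  shows "k r = 0"
proof -
  let ?P = "{p. p permutes {..<n}}"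
  define Q where "Q p = (\<Prod>i\<in>{..<n} - {r}. B i (p i))" for p :: "nat \<Rightarrow> nat"
  define row where "row x = (\<lambda>i j. if i = r then x j else B i j)" for x :: "nat \<Rightarrow> int"
  have row: "det_n n (row x) = (\<Sum>p\<in>?P. sign p * x (p r) * Q p)" for x
    unfolding row_def Q_def using det_n_replace_row[OF r] by simp
  have "det_n n (row (\<lambda>j. \<Sum>l<n. k l * B l j)) = 0"
    unfolding row using kB permutes_in_image r by (fastforce intro: sum.neutral)
  moreover have "det_n n (row (\<lambda>j. \<Sum>l<n. k l * B l j)) = (\<Sum>l<n. k l * det_n n (row (B l)))"
    unfolding row by (simp add: sum_distrib_left sum_distrib_right algebra_simps sum.swap[of _ ?P])
  moreover have "k l * det_n n (row (B l)) = (if l = r then k r * det_n n B else 0)" if "l < n" for l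
  proof (cases "l = r")
    case False
    then show ?thesis using det_n_equal_rows[OF r that, of "row (B l)"] unfolding row_def by simp
  next
    case True
    have "row (B r) = B" unfolding row_def by (intro ext) simp
    then show ?thesis using True by simp
  qed
  ultimately have "k r * det_n n B = 0" using r by simp
  then show ?thesis using assms(1) by simp
qed

definition xmono_supp_in :: "'g::ab_group_add set \<Rightarrow> 'g \<Rightarrow> (nat \<Rightarrow> int) \<Rightarrow> ('g grp \<Rightarrow> 'k::field) \<Rightarrow> bool" where
  "xmono_supp_in S \<gamma> \<kappa> s \<longleftrightarrow> (\<exists>w. s = xmono w \<kappa> \<and> (\<forall>x\<in>supp w. x - \<gamma> \<in> finite_sums S))"

lemma xmono_supp_in_smult:
  assumes "xmono_supp_in S \<gamma> \<kappa> s" "xmono_supp_in S \<gamma>' \<kappa>' t"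
  shows "xmono_supp_in S (\<gamma> + \<gamma>') (\<lambda>j. \<kappa> j + \<kappa>' j) (smult s t)"
proof -
  obtain w where w: "s = xmono w \<kappa>" "\<forall>x\<in>supp w. x - \<gamma> \<in> finite_sums S"
    using assms(1) unfolding xmono_supp_in_def by blast
  obtain w' where w': "t = xmono w' \<kappa>'" "\<forall>x\<in>supp w'. x - \<gamma>' \<in> finite_sums S"
    using assms(2) unfolding xmono_supp_in_def by blast
  have "x - (\<gamma> + \<gamma>') \<in> finite_sums S" if x: "x \<in> supp (conv w w')" for x
  proof -
    obtain y y' where "y \<in> supp w" "y' \<in> supp w'" "x = y + y'"
      using x supp_conv_subset unfolding setsum_def by blast
    moreover have "x - (\<gamma> + \<gamma>') = (y - \<gamma>) + (y' - \<gamma>')" if "x = y + y'" for y y'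
      using that by (simp add: algebra_simps)
    ultimately show ?thesis using w(2) w'(2) finite_sums_add by metis
  qed
  then show ?thesis unfolding xmono_supp_in_def w(1) w'(1) smult_xmono by blast
qed

lemma xmono_supp_in_sone: "xmono_supp_in S 0 (\<lambda>_. 0) sone"
  unfolding xmono_supp_in_def sone_eq_xmono
  by (intro exI[of _ delta]) (simp add: supp_delta zero_in_finite_sums)

lemma xmono_supp_in_snpow:
  assumes "xmono_supp_in S \<gamma> \<kappa> s"
  shows "xmono_supp_in S (\<Sum>_<m. \<gamma>) (\<lambda>j. int m * \<kappa> j) (snpow s m)"
proof (induction m)
  case 0
  then show ?case using xmono_supp_in_sone by simp
next
  case (Suc m)
  have "xmono_supp_in S (\<gamma> + (\<Sum>_<m. \<gamma>)) (\<lambda>j. \<kappa> j + int m * \<kappa> j) (smult s (snpow s m))"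
    by (rule xmono_supp_in_smult[OF assms Suc.IH])
  moreover have "(\<lambda>j. \<kappa> j + int m * \<kappa> j) = (\<lambda>j. int (Suc m) * \<kappa> j)" by (simp add: algebra_simps)
  ultimately show ?case by (simp add: add.commute)
qed

lemma xmono_supp_in_sipow:
  assumes "xmono_supp_in S \<gamma> b s" "xmono_supp_in S (- \<gamma>) (\<lambda>j. - b j) (sinv le C s)"
  shows "xmono_supp_in S (zsmul k \<gamma>) (\<lambda>j. k * b j) (sipow le C s k)"
proof (cases "0 \<le> k")
  case True
  then show ?thesis using xmono_supp_in_snpow[OF assms(1), of "nat k"] unfolding sipow_def zsmul_def by simp
next
  case False
  then show ?thesis using xmono_supp_in_snpow[OF assms(2), of "nat (- k)"]
    unfolding sipow_def zsmul_def by (simp add: sum_negf)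
qed

lemma xmono_supp_in_sprod:
  assumes "\<And>i. i < m \<Longrightarrow> xmono_supp_in S (\<gamma> i) (\<kappa> i) (F i)"
  shows "xmono_supp_in S (\<Sum>i<m. \<gamma> i) (\<lambda>j. \<Sum>i<m. \<kappa> i j) (sprod F m)"
  using assms
proof (induction m)
  case 0
  then show ?case using xmono_supp_in_sone by simp
next
  case (Suc m)
  then show ?case using xmono_supp_in_smult[of S "\<Sum>i<m. \<gamma> i" "\<lambda>j. \<Sum>i<m. \<kappa> i j" "sprod F m"] by simp
qed

locale monomial_substitution = grp_order n le
  for n :: nat and le :: "('g::ab_group_add) grp \<Rightarrow> 'g grp \<Rightarrow> bool" +
  fixes a :: "nat \<Rightarrow> 'g \<Rightarrow> 'k::field" and B :: "nat \<Rightarrow> nat \<Rightarrow> int" and Phi :: "'g grp \<Rightarrow> 'k"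
  assumes a_MN: "\<forall>i<n. a i \<in> MN (leG le) UNIV"
    and a_nonzero: "\<forall>i<n. a i \<noteq> (\<lambda>_. 0)"
    and det_B: "det_n n B \<noteq> 0"
    and Phi_MN: "Phi \<in> MN (le_f le n (\<lambda>i. init_exp (leG le) (a i)) B) (grp_carrier n)"
begin

definition f :: "nat \<Rightarrow> 'g grp \<Rightarrow> 'k" where
  "f i = xmono (a i) (brow n B i)"

definition F :: "(nat \<Rightarrow> int) \<Rightarrow> 'g grp \<Rightarrow> 'k" where
  "F k = smult (embG (coeffx Phi k)) (sprod (\<lambda>i. sipow le (grp_carrier n) (f i) (k i)) n)"

definition gs :: "nat \<Rightarrow> 'g" where
  "gs i = init_exp (leG le) (a i)"

definition S :: "'g set" where
  "S = (\<Union>i<n. supp_offsets (leG le) (a i))"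

text \<open>\<open>\<Gamma> k\<close> and \<open>K k = k B\<close> are the \<open>G\<close>- and \<open>H\<close>-components of \<open>\<^bold>f(0, k)\<close>.\<close>

definition \<Gamma> :: "(nat \<Rightarrow> int) \<Rightarrow> 'g" where
  "\<Gamma> k = (\<Sum>i<n. zsmul (k i) (gs i))"

definition K :: "(nat \<Rightarrow> int) \<Rightarrow> nat \<Rightarrow> int" where
  "K k = (\<lambda>j. \<Sum>i<n. k i * brow n B i j)"

lemma fmap_eq: "fmap n gs B (y, k) = (y + \<Gamma> k, K k)"
  unfolding fmap_def \<Gamma>_def K_def by simp

lemma a_wo: "i < n \<Longrightarrow> well_ordered_on (leG le) (supp (a i))"
  using a_MN unfolding MN_def by blast

lemma S_wo_pos: "well_ordered_on (leG le) S" "\<forall>s\<in>S. G.lt 0 s"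
proof -
  have wo_pos: "well_ordered_on (leG le) (supp_offsets (leG le) (a i))"
    "\<forall>s\<in>supp_offsets (leG le) (a i). G.lt 0 s" if "i < n" for i
    using G.supp_offsets_pos[OF a_nonzero[rule_format, OF that] a_wo[OF that]] by blast+
  show "well_ordered_on (leG le) S"
    unfolding S_def by (rule G.well_ordered_on_UN) (simp add: wo_pos)
  show "\<forall>s\<in>S. G.lt 0 s" unfolding S_def using wo_pos(2) by blast
qed

lemma f_xmono_supp_in: "i < n \<Longrightarrow> xmono_supp_in S (gs i) (brow n B i) (f i)"
  unfolding xmono_supp_in_def f_def
proof (intro exI[of _ "a i"] conjI ballI)
  fix x assume i: "i < n" and x: "x \<in> supp (a i)"
  show "x - gs i \<in> finite_sums S"
  proof (cases "x = gs i")
    case False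
    then have "x - gs i \<in> supp_offsets (leG le) (a i)" using x unfolding supp_offsets_def gs_def by simp
    then have "x - gs i \<in> S" using i unfolding S_def by blast
    then show ?thesis by (rule in_finite_sums)
  qed (simp add: zero_in_finite_sums)
qed simp

lemma f_inv_xmono_supp_in:
  assumes i: "i < n"
  shows "xmono_supp_in S (- gs i) (\<lambda>j. - brow n B i j) (sinv le (grp_carrier n) (f i))"
proof -
  obtain u where u: "sinv le (grp_carrier n) (f i) = xmono u (\<lambda>j. - brow n B i j)"
    "\<forall>x\<in>supp u. x + gs i \<in> finite_sums (supp_offsets (leG le) (a i))"
    using sinv_xmono[OF a_nonzero[rule_format, OF i] a_wo[OF i] brow_in_Hn]
    unfolding f_def gs_def by blast
  have "supp_offsets (leG le) (a i) \<subseteq> S" unfolding S_def using i by blast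
  then have "finite_sums (supp_offsets (leG le) (a i)) \<subseteq> finite_sums S" by (rule finite_sums_mono)
  then show ?thesis unfolding xmono_supp_in_def u(1)
    by (intro exI[of _ u] conjI ballI) (use u(2) in auto)
qed

lemma factors_prod_xmono_supp_in:
  "xmono_supp_in S (\<Gamma> k) (K k) (sprod (\<lambda>i. sipow le (grp_carrier n) (f i) (k i)) n)"
  unfolding \<Gamma>_def K_def
  by (intro xmono_supp_in_sprod xmono_supp_in_sipow f_xmono_supp_in f_inv_xmono_supp_in)

lemma supp_F:
  assumes "p \<in> supp (F k)"
  shows "snd p = K k" "p \<in> setsum (fmap n gs B ` supp Phi) ((\<lambda>m. (m, \<lambda>_. 0)) ` finite_sums S)"
proof -
  obtain w where w: "sprod (\<lambda>i. sipow le (grp_carrier n) (f i) (k i)) n = xmono w (K k)"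
      "\<forall>x\<in>supp w. x - \<Gamma> k \<in> finite_sums S"
    using factors_prod_xmono_supp_in[of k] unfolding xmono_supp_in_def by blast
  have "F k = xmono (conv (coeffx Phi k) w) (K k)"
    unfolding F_def w(1) embG_eq_xmono smult_xmono by simp
  then have "p \<in> (\<lambda>g. (g, K k)) ` supp (conv (coeffx Phi k) w)"
    using assms supp_xmono by metis
  then obtain x where x: "p = (x, K k)" "x \<in> supp (conv (coeffx Phi k) w)" by blast
  then show "snd p = K k" by simp
  obtain y y' where y: "y \<in> supp (coeffx Phi k)" "y' \<in> supp w" "x = y + y'"
    using x(2) supp_conv_subset unfolding setsum_def by blast
  have "(y, k) \<in> supp Phi" using y(1) unfolding supp_def coeffx_def by simp
  moreover have "y' - \<Gamma> k \<in> finite_sums S" using w(2) y(2) by blast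
  moreover have "p = fmap n gs B (y, k) + (y' - \<Gamma> k, \<lambda>_. 0)"
    unfolding fmap_eq x(1) y(3) by (simp add: plus_fun_def)
  ultimately show "p \<in> setsum (fmap n gs B ` supp Phi) ((\<lambda>m. (m, \<lambda>_. 0)) ` finite_sums S)"
    unfolding setsum_def by blast
qed

lemma inj_on_K: "inj_on K (Hn n)"
proof
  fix k k' assume k: "k \<in> Hn n" "k' \<in> Hn n" "K k = K k'"
  have "(\<Sum>i<n. (k i - k' i) * B i j) = 0" if "j < n" for j
    using fun_cong[OF k(3), of j] that unfolding K_def brow_def
    by (simp add: left_diff_distrib sum_subtractf)
  then have diff: "k i - k' i = 0" if "i < n" for i
    using det_n_left_kernel[OF det_B, of "\<lambda>i. k i - k' i"] that by blast
  show "k = k'"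
  proof
    fix i show "k i = k' i"
      using diff[of i] k(1,2) unfolding Hn_def by (cases "i < n") auto
  qed
qed

lemma F_summable: "summable_fam le (grp_carrier n) F (Hn n)"
  unfolding summable_fam_def
proof (intro conjI allI)
  let ?U = "setsum (fmap n gs B ` supp Phi) ((\<lambda>m. (m, \<lambda>_::nat. 0::int)) ` finite_sums S)"
  have "fmap n gs B x \<in> grp_carrier n" for x
    unfolding grp_carrier_iff fmap_def Hn_def brow_def by simp
  then have fmap_C: "fmap n gs B ` supp Phi \<subseteq> grp_carrier n" by blast
  have M_C: "(\<lambda>m. (m, \<lambda>_::nat. 0::int)) ` finite_sums S \<subseteq> grp_carrier n"
    using in_grp_carrier[OF Hn_zero] by blast
  have "(\<lambda>i. init_exp (leG le) (a i)) = gs" by (simp add: fun_eq_iff gs_def)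
  then have "well_ordered_on (\<lambda>x y. le (fmap n gs B x) (fmap n gs B y)) (supp Phi)"
    using Phi_MN unfolding MN_def le_f_def by simp
  then have "well_ordered_on le (fmap n gs B ` supp Phi)" by (rule well_ordered_on_image)
  moreover have "well_ordered_on le ((\<lambda>m. (m, \<lambda>_::nat. 0::int)) ` finite_sums S)"
    using well_ordered_on_exponent_image[OF Hn_zero] G.well_ordered_on_finite_sums S_wo_pos by blast
  ultimately have "well_ordered_on le ?U" using GH.well_ordered_on_setsum fmap_C M_C by blast
  moreover have "(\<Union>k\<in>Hn n. supp (F k)) \<subseteq> ?U" using supp_F(2) by blast
  ultimately show "well_ordered_on le (\<Union>k\<in>Hn n. supp (F k))" using well_ordered_on_subset by blast
  show "(\<Union>k\<in>Hn n. supp (F k)) \<subseteq> grp_carrier n"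
    using supp_F(2) GH.setsum_in[OF fmap_C M_C] by blast
  fix c
  have "{k \<in> Hn n. F k c \<noteq> 0} \<subseteq> K -` {snd c} \<inter> Hn n"
    using supp_F(1) unfolding supp_def by fastforce
  then show "finite {k \<in> Hn n. F k c \<noteq> 0}"
    using finite_vimage_IntI[OF _ inj_on_K] finite_subset by blast
qed

lemma F_zero: "F (\<lambda>_. 0) = embG (coeffx Phi (\<lambda>_. 0))"
proof -
  have "sprod (\<lambda>i. sone :: 'g grp \<Rightarrow> 'k) m = sone" for m
    by (induction m) (simp_all add: sone_eq_xmono smult_xmono conv_delta)
  then show ?thesis unfolding F_def sipow_def by (simp add: embG_eq_xmono sone_eq_xmono smult_xmono conv_delta)
qed

text \<open>Only \<open>k = 0\<close> contributes to \<open>x\<^sup>0\<close>, since \<open>F k\<close> lives in degree \<open>K k\<close> and \<open>K\<close> is injective.\<close>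

lemma CT_x_sum_F: "CT_x (sum_fam F (Hn n)) = CT_f Phi"
proof
  fix g
  have "{k \<in> Hn n. F k (g, \<lambda>_. 0) \<noteq> 0} \<subseteq> {\<lambda>_. 0}"
  proof
    fix k assume k: "k \<in> {k \<in> Hn n. F k (g, \<lambda>_. 0) \<noteq> 0}"
    then have "K k = K (\<lambda>_. 0)" using supp_F(1)[of "(g, \<lambda>_. 0)" k] unfolding supp_def K_def by auto
    then show "k \<in> {\<lambda>_. 0}" using inj_on_K k Hn_zero unfolding inj_on_def by blast
  qed
  moreover have "F (\<lambda>_. 0) (g, \<lambda>_. 0) = Phi (g, \<lambda>_. 0)"
    unfolding F_zero embG_def coeffx_def by simp
  ultimately have "{k \<in> Hn n. F k (g, \<lambda>_. 0) \<noteq> 0} = (if Phi (g, \<lambda>_. 0) = 0 then {} else {\<lambda>_. 0})"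
    using Hn_zero by auto
  then show "CT_x (sum_fam F (Hn n)) g = CT_f Phi g"
    unfolding CT_x_def CT_f_def coeffx_def sum_fam_def using F_zero
    by (simp add: embG_def coeffx_def)
qed

end

theorem mainTheorem12:
  fixes n :: nat
    and le :: "('g::ab_group_add) grp \<Rightarrow> 'g grp \<Rightarrow> bool"
    and a :: "nat \<Rightarrow> 'g \<Rightarrow> 'k::field"
    and B :: "nat \<Rightarrow> nat \<Rightarrow> int"
    and Phi :: "'g grp \<Rightarrow> 'k"
  assumes ord: "ordered_group_on (grp_carrier n) le"
    and a_MN: "\<forall>i<n. a i \<in> MN (leG le) UNIV"
    and a_nz: "\<forall>i<n. a i \<noteq> (\<lambda>_. 0)"
    and detB: "det_n n B \<noteq> 0"
    and Phi_MN: "Phi \<in> MN (le_f le n (\<lambda>i. init_exp (leG le) (a i)) B) (grp_carrier n)"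
  shows "let f = (\<lambda>i. xmono (a i) (brow n B i));
             F = (\<lambda>k. smult (embG (coeffx Phi k))
                        (sprod (\<lambda>i. sipow le (grp_carrier n) (f i) (k i)) n))
         in summable_fam le (grp_carrier n) F (Hn n)
            \<and> CT_x (sum_fam F (Hn n)) = CT_f Phi
            \<and> CT_f Phi = coeffx Phi (\<lambda>_. 0)"
proof -
  interpret monomial_substitution n le a B Phi
    by unfold_locales (use assms in auto)
  have "f = (\<lambda>i. xmono (a i) (brow n B i))" by (simp add: fun_eq_iff f_def)
  moreover have "F = (\<lambda>k. smult (embG (coeffx Phi k)) (sprod (\<lambda>i. sipow le (grp_carrier n) (f i) (k i)) n))"
    by (simp add: fun_eq_iff F_def)
  ultimately show ?thesis
    unfolding Let_def using F_summable CT_x_sum_F by (simp add: CT_f_def)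
qed

end
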